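(* Fix a set size $m\ge1$, a population CDF $F$ and a point $t$. For $r=1,\dots,m$ let $Y_{(r)}^{1},\dots,Y_{(r)}^{n_r}$ be the measured units of the $r$-th stratum of a MinPNS sample obtained under perfect ranking, all observations mutually independent, those in stratum $r$ identically distributed with CDF $\mathbb{B}_{(r)}(F(t))$, where $\mathbb{B}_{(r)}(x)=\frac1r\sum_{i=1}^r\mathbb{B}(x,i,m+1-i)$. Let $y_{(r)}^+=\sum_{j=1}^{n_r}\mathbb{I}(Y_{(r)}^j\le t)$ and let \[F_{ml}(t)=\arg\max_{p\in[0,1]}\sum_{r=1}^m\Big[\log\binom{n_r}{y^+_{(r)}}+y^+_{(r)}\log\mathbb{B}_{(r)}(p)+(n_r-y^+_{(r)})\log\big(1-\mathbb{B}_{(r)}(p)\big)\Big].\] If $n_r\to\infty$ for each $r$ such that $n=\sum_r n_r\to\infty$, $n_r/n\to\lambda_r\in(0,1)$ and $\sum_{r=1}^m\lambda_r=1$, then $\sqrt n\,(F_{ml}(t)-F(t))$ converges in distribution to a normal distribution with mean zero and variance \[\sigma_{ml}^2=\Big(\sum_{r=1}^m\lambda_r\frac{\beta_{(r)}^2(F(t))}{\mathbb{B}_{(r)}(F(t))\big(1-\mathbb{B}_{(r)}(F(t))\big)}\Big)^{-1},\] where $\beta_{(r)}(x)=\mathbb{B}_{(r)}'(x)=\frac1r\sum_{i=1}^r\beta(x,i,m+1-i)$.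
   Context: $\mathbb{B}(x,i,m+1-i)=\int_0^x i\binom{m}{i}u^{i-1}(1-u)^{m-i}\,du$ is the Beta$(i,m+1-i)$ CDF at $x$ and $\beta(x,i,m+1-i)$ is the corresponding Beta density at $x$; $\mathbb{I}$ is the indicator function. MinPNS (minimum partial nomination sampling): $n$ independent sets of $m$ units are drawn; in each set the unit judged smallest is measured, but the ranker may declare it tied with other units, in which case one tied unit is chosen at random; a measured unit is in stratum $r$ if exactly $r$ units (including itself) were declared tied for smallest in its set. Perfect ranking means the tied units are exactly the $r$ smallest units of the set, so the measured unit is a uniformly random one of the $r$ smallest order statistics of $m$ i.i.d. draws from $F$; the stratum sizes $n_r$ are treated as given. *)

theory Defs
  imports "HOL-Probability.Probability"
begin

text \<open>Beta(i, m+1-i) density at x.\<close>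
definition beta_dens :: "nat \<Rightarrow> nat \<Rightarrow> real \<Rightarrow> real" where
  "beta_dens m i x = real i * real (m choose i) * x ^ (i - 1) * (1 - x) ^ (m - i)"

definition beta_cdf :: "nat \<Rightarrow> nat \<Rightarrow> real \<Rightarrow> real" where
  "beta_cdf m i x = integral {0..x} (beta_dens m i)"

definition Bmix :: "nat \<Rightarrow> nat \<Rightarrow> real \<Rightarrow> real" where
  "Bmix m r x = (1 / real r) * (\<Sum>i = 1..r. beta_cdf m i x)"

definition bmix :: "nat \<Rightarrow> nat \<Rightarrow> real \<Rightarrow> real" where
  "bmix m r x = (1 / real r) * (\<Sum>i = 1..r. beta_dens m i x)"

definition minpns_lik :: "nat \<Rightarrow> (nat \<Rightarrow> nat) \<Rightarrow> (nat \<Rightarrow> nat) \<Rightarrow> real \<Rightarrow> real" where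
  "minpns_lik m nr y p =
     (\<Prod>r = 1..m. real (nr r choose y r) * Bmix m r p ^ y r * (1 - Bmix m r p) ^ (nr r - y r))"

definition sigma_ml_sq :: "nat \<Rightarrow> (nat \<Rightarrow> real) \<Rightarrow> real \<Rightarrow> real" where
  "sigma_ml_sq m lam x =
     inverse (\<Sum>r = 1..m. lam r * (bmix m r x)\<^sup>2 / (Bmix m r x * (1 - Bmix m r x)))"

end

theory Submission
  imports Defs
begin

(*
  Write q_r = B_(r)(F(t)) and y_r for the number of measured units of stratum r not exceeding t.
  The log-likelihood l(p) = sum_r y_r log B_(r)(p) + (n_r - y_r) log (1 - B_(r)(p)) has score
  U(p) = sum_r g_r(p) (y_r - n_r B_(r)(p)) with g_r = beta_(r) / (B_(r) (1 - B_(r))).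
  Once every y_r / n_r is within a fixed eta of q_r, U is strictly decreasing on a fixed window
  around F(t), nonnegative to its left and nonpositive to its right.  So for p_n = F(t) + x / sqrt n
  the maximiser satisfies F_ml < p_n if U(p_n) < 0, and U(p_n) <= 0 if F_ml <= p_n: up to an event
  of vanishing probability, {sqrt n (F_ml - F(t)) <= x} lies between {U(p_n) < 0} and {U(p_n) <= 0}.
  Now U(p_n) / (s sqrt n) = W_n - c_n, where W_n = sum_r g_r(p_n) (y_r - n_r q_r) / (s sqrt n) is a
  weighted sum of independent centred Bernoulli variables, asymptotically standard normal by Levy's
  continuity theorem once s^2 = 1 / sigma_ml^2, while c_n -> x s by differentiability of B_(r).
  Hence P(sqrt n (F_ml - F(t)) <= x) -> Phi(x s), the normal CDF with variance sigma_ml^2 at x.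
*)

section \<open>Beta mixtures\<close>

definition beta_dens' :: "nat \<Rightarrow> nat \<Rightarrow> real \<Rightarrow> real" where
  "beta_dens' m i x = real i * real (m choose i) *
     (real (i - 1) * x ^ (i - 1 - 1) * (1 - x) ^ (m - i) - x ^ (i - 1) * (real (m - i) * (1 - x) ^ (m - i - 1)))"

lemma beta_dens_has_real_derivative: "(beta_dens m i has_real_derivative beta_dens' m i x) (at x)"
  unfolding beta_dens_def[abs_def] beta_dens'_def
  by (auto intro!: derivative_eq_intros simp: algebra_simps)

lemma continuous_on_beta_dens [continuous_intros]: "continuous_on S (beta_dens m i)"
  unfolding beta_dens_def[abs_def] by (intro continuous_intros)

lemma beta_dens_pos: "1 \<le> i \<Longrightarrow> i \<le> m \<Longrightarrow> 0 < x \<Longrightarrow> x < 1 \<Longrightarrow> 0 < beta_dens m i x"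
  unfolding beta_dens_def by auto

lemma bernstein_has_real_derivative:
  "((\<lambda>x. real (m choose j) * x ^ j * (1 - x) ^ (m - j)) has_real_derivative
     beta_dens m j x - beta_dens m (Suc j) x) (at x)"
proof -
  have "Suc j * (m choose Suc j) = (m - j) * (m choose j)"
    by (simp only: binomial_absorb_comp binomial_absorption)
  then have "real (Suc j) * real (m choose Suc j) = real (m - j) * real (m choose j)"
    by (simp only: of_nat_mult[symmetric])
  then have "beta_dens m (Suc j) x = real (m - j) * real (m choose j) * x ^ j * (1 - x) ^ (m - j - 1)"
    unfolding beta_dens_def by (metis diff_Suc_1 diff_Suc_eq_diff_pred diff_commute)
  moreover have "beta_dens m j x = real j * real (m choose j) * x ^ (j - 1) * (1 - x) ^ (m - j)"
    unfolding beta_dens_def ..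
  ultimately show ?thesis
    by (auto intro!: derivative_eq_intros simp: algebra_simps)
qed

lemma beta_cdf_eq_binomial_tail:
  assumes "1 \<le> i" "0 \<le> x"
  shows "beta_cdf m i x = (\<Sum>j = i..m. real (m choose j) * x ^ j * (1 - x) ^ (m - j))"
proof -
  define T where "T x = (\<Sum>j = i..m. real (m choose j) * x ^ j * (1 - x) ^ (m - j))" for x
  have "(T has_real_derivative beta_dens m i y) (at y)" for y
  proof -
    have "(T has_real_derivative (\<Sum>j = i..m. beta_dens m j y - beta_dens m (Suc j) y)) (at y)"
      unfolding T_def by (intro DERIV_sum bernstein_has_real_derivative)
    moreover have "(\<Sum>j = i..m. beta_dens m j y - beta_dens m (Suc j) y) = beta_dens m i y"
    proof (cases "i \<le> m")
      case True
      then show ?thesis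
        using sum_Suc_diff[of i m "\<lambda>j. - beta_dens m j y"] by (simp add: beta_dens_def)
    qed (simp add: beta_dens_def)
    ultimately show ?thesis by simp
  qed
  then have "(beta_dens m i has_integral T x - T 0) {0..x}"
    using assms(2) by (intro fundamental_theorem_of_calculus)
      (auto simp: has_real_derivative_iff_has_vector_derivative[symmetric] intro: has_field_derivative_at_within)
  moreover have "T 0 = 0"
    unfolding T_def using assms(1) by (intro sum.neutral) auto
  ultimately show ?thesis
    unfolding beta_cdf_def T_def by (simp add: integral_unique)
qed

lemma beta_cdf_1: "1 \<le> i \<Longrightarrow> i \<le> m \<Longrightarrow> beta_cdf m i 1 = 1"
  by (simp add: beta_cdf_eq_binomial_tail sum.remove[of _ m] sum.neutral)

lemma beta_cdf_has_real_derivative: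
  assumes "0 < x" "x < 1"
  shows "(beta_cdf m i has_real_derivative beta_dens m i x) (at x)"
proof -
  have "(beta_cdf m i has_real_derivative beta_dens m i x) (at x within {0..1})"
    unfolding beta_cdf_def[abs_def] using assms
    by (intro integral_has_real_derivative continuous_on_beta_dens) auto
  moreover have "at x within {0..1} = at x"
    using assms by (intro at_within_interior) auto
  ultimately show ?thesis by simp
qed

lemma continuous_on_beta_cdf: "continuous_on {0..1} (beta_cdf m i)"
  unfolding beta_cdf_def[abs_def]
  by (intro indefinite_integral_continuous_1 integrable_continuous_interval continuous_on_beta_dens)

definition bmix' :: "nat \<Rightarrow> nat \<Rightarrow> real \<Rightarrow> real" where
  "bmix' m r x = (1 / real r) * (\<Sum>i = 1..r. beta_dens' m i x)"

lemma bmix_has_real_derivative: "(bmix m r has_real_derivative bmix' m r x) (at x)"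
  unfolding bmix_def[abs_def] bmix'_def
  by (intro DERIV_cmult DERIV_sum beta_dens_has_real_derivative)

lemma isCont_bmix [continuous_intros]: "isCont (bmix m r) x"
  unfolding bmix_def[abs_def] beta_dens_def by (intro continuous_intros)

lemma isCont_bmix' [continuous_intros]: "isCont (bmix' m r) x"
  unfolding bmix'_def beta_dens'_def by (intro continuous_intros)

lemma bmix_pos:
  assumes "1 \<le> r" "r \<le> m" "0 < x" "x < 1"
  shows "0 < bmix m r x"
proof -
  have "0 < (\<Sum>i = 1..r. beta_dens m i x)"
    using assms by (intro sum_pos beta_dens_pos) auto
  then show ?thesis
    unfolding bmix_def using assms by simp
qed

lemma Bmix_has_real_derivative:
  "0 < x \<Longrightarrow> x < 1 \<Longrightarrow> (Bmix m r has_real_derivative bmix m r x) (at x)"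
  unfolding Bmix_def[abs_def] bmix_def
  by (intro DERIV_cmult DERIV_sum beta_cdf_has_real_derivative)

lemma isCont_Bmix: "0 < x \<Longrightarrow> x < 1 \<Longrightarrow> isCont (Bmix m r) x"
  using Bmix_has_real_derivative DERIV_isCont by blast

lemma continuous_on_Bmix: "continuous_on {0..1} (Bmix m r)"
  unfolding Bmix_def[abs_def] by (intro continuous_intros continuous_on_beta_cdf)

lemma Bmix_0 [simp]: "Bmix m r 0 = 0"
  unfolding Bmix_def beta_cdf_def by simp

lemma Bmix_1: "1 \<le> r \<Longrightarrow> r \<le> m \<Longrightarrow> Bmix m r 1 = 1"
  unfolding Bmix_def by (simp add: beta_cdf_1)

lemma Bmix_strict_mono:
  assumes "1 \<le> r" "r \<le> m" "0 \<le> a" "a < b" "b \<le> 1"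
  shows "Bmix m r a < Bmix m r b"
proof (rule DERIV_pos_imp_increasing_open[OF \<open>a < b\<close>])
  fix x assume "a < x" "x < b"
  with assms show "\<exists>y. (Bmix m r has_real_derivative y) (at x) \<and> 0 < y"
    by (intro exI[of _ "bmix m r x"]) (auto intro!: Bmix_has_real_derivative bmix_pos)
next
  show "continuous_on {a..b} (Bmix m r)"
    using assms by (intro continuous_on_subset[OF continuous_on_Bmix]) auto
qed

lemma Bmix_mono:
  "1 \<le> r \<Longrightarrow> r \<le> m \<Longrightarrow> 0 \<le> a \<Longrightarrow> a \<le> b \<Longrightarrow> b \<le> 1 \<Longrightarrow> Bmix m r a \<le> Bmix m r b"
  using Bmix_strict_mono[of r m a b] by (cases "a = b") auto

lemma Bmix_bounds:
  assumes "r \<in> {1..m}" "0 < p" "p < 1"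
  shows "0 < Bmix m r p" "Bmix m r p < 1"
  using Bmix_strict_mono[of r m 0 p] Bmix_strict_mono[of r m p 1] Bmix_1[of r m] assms by auto

section \<open>Characteristic functions of centred Bernoulli variables\<close>

lemma tendsto_power_exp:
  fixes z :: "nat \<Rightarrow> complex" and n :: "nat \<Rightarrow> nat"
  assumes n: "filterlim n at_top sequentially" and z: "\<And>k. norm (z k) \<le> 1" and c: "c \<le> 0"
    and lim: "(\<lambda>k. of_nat (n k) * (z k - 1)) \<longlonglongrightarrow> of_real c"
  shows "(\<lambda>k. z k ^ n k) \<longlonglongrightarrow> of_real (exp c)"
proof -
  define w where "w k = 1 + c / real (n k)" for k
  have "filterlim (\<lambda>k. real (n k)) at_top sequentially"
    by (rule filterlim_compose[OF filterlim_real_sequentially n])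
  then have "eventually (\<lambda>k. max 1 (- c) \<le> real (n k)) sequentially"
    unfolding filterlim_at_top by blast
  then have "eventually (\<lambda>k. - c \<le> real (n k) \<and> 0 < n k) sequentially"
    by eventually_elim auto
  then have "eventually (\<lambda>k. norm (z k ^ n k - of_real (w k ^ n k))
      \<le> norm (of_nat (n k) * (z k - 1) - of_real c)) sequentially"
  proof eventually_elim
    case (elim k)
    then have "\<bar>w k\<bar> \<le> 1"
      using c by (auto simp: w_def field_simps)
    then have "norm (z k ^ n k - of_real (w k) ^ n k) \<le> n k * norm (z k - of_real (w k))"
      by (intro norm_power_diff z) simp
    also have "n k * norm (z k - of_real (w k)) = norm (of_nat (n k) * (z k - of_real (w k)))"
      by (simp add: norm_mult)
    also have "of_nat (n k) * (z k - of_real (w k)) = of_nat (n k) * (z k - 1) - of_real c"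
      using elim by (simp add: w_def field_simps)
    finally show ?case by simp
  qed
  moreover have "(\<lambda>k. norm (of_nat (n k) * (z k - 1) - of_real c)) \<longlonglongrightarrow> 0"
    using tendsto_diff[OF lim tendsto_const, of "of_real c"] by (simp add: tendsto_norm_zero)
  ultimately have "(\<lambda>k. z k ^ n k - of_real (w k ^ n k)) \<longlonglongrightarrow> 0"
    by (rule Lim_null_comparison)
  moreover have "(\<lambda>k. of_real (w k ^ n k) :: complex) \<longlonglongrightarrow> of_real (exp c)"
    unfolding w_def by (intro tendsto_of_real filterlim_compose[OF tendsto_exp_limit_sequentially n])
  ultimately show ?thesis
    using tendsto_add by fastforce
qed

definition centred_bernoulli_char :: "real \<Rightarrow> real \<Rightarrow> complex" where
  "centred_bernoulli_char q v = of_real q * iexp (v * (1 - q)) + of_real (1 - q) * iexp (- (v * q))"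

lemma norm_centred_bernoulli_char_le:
  "0 \<le> q \<Longrightarrow> q \<le> 1 \<Longrightarrow> norm (centred_bernoulli_char q v) \<le> 1"
  unfolding centred_bernoulli_char_def
  by (rule order.trans[OF norm_triangle_ineq]) (simp add: norm_mult del: of_real_diff)

lemma centred_bernoulli_char_approx:
  assumes q: "0 \<le> q" "q \<le> 1"
  shows "norm (centred_bernoulli_char q v - of_real (1 - v\<^sup>2 * (q * (1 - q)) / 2)) \<le> \<bar>v\<bar> ^ 3 / 6"
proof -
  define T where "T x = 1 + \<i> * complex_of_real x - complex_of_real (x\<^sup>2 / 2)" for x
  have T: "norm (iexp x - T x) \<le> \<bar>x\<bar> ^ 3 / 6" for x
    using iexp_approx1[of x 2]
    by (simp add: T_def numeral_2_eq_2 numeral_3_eq_3 power2_eq_square field_simps)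
  define a b where "a = v * (1 - q)" and "b = - (v * q)"
  have ab: "\<bar>a\<bar> ^ 3 \<le> \<bar>v\<bar> ^ 3" "\<bar>b\<bar> ^ 3 \<le> \<bar>v\<bar> ^ 3"
    using q by (auto simp: a_def b_def abs_mult intro!: power_mono mult_left_le)
  have "of_real q * T a + of_real (1 - q) * T b = complex_of_real (1 - v\<^sup>2 * (q * (1 - q)) / 2)"
    unfolding T_def a_def b_def by (simp add: complex_eq_iff power2_eq_square) (simp add: field_simps)
  then have "centred_bernoulli_char q v - of_real (1 - v\<^sup>2 * (q * (1 - q)) / 2)
      = of_real q * (iexp a - T a) + of_real (1 - q) * (iexp b - T b)"
    unfolding centred_bernoulli_char_def a_def b_def by (simp add: algebra_simps)
  also have "norm \<dots> \<le> q * (\<bar>a\<bar> ^ 3 / 6) + (1 - q) * (\<bar>b\<bar> ^ 3 / 6)"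
    using q mult_left_mono[OF T[of a], of q] mult_left_mono[OF T[of b], of "1 - q"]
    by (intro order.trans[OF norm_triangle_ineq] add_mono) (simp_all add: norm_mult del: of_real_diff)
  also have "\<dots> \<le> q * (\<bar>v\<bar> ^ 3 / 6) + (1 - q) * (\<bar>v\<bar> ^ 3 / 6)"
    using q ab by (intro add_mono mult_left_mono) auto
  also have "\<dots> = \<bar>v\<bar> ^ 3 / 6"
    by (simp add: field_simps)
  finally show ?thesis .
qed

lemma centred_bernoulli_char_power_tendsto:
  fixes n :: "nat \<Rightarrow> nat" and v :: "nat \<Rightarrow> real"
  assumes q: "0 \<le> q" "q \<le> 1" and n: "filterlim n at_top sequentially"
    and L: "(\<lambda>k. real (n k) * (v k)\<^sup>2) \<longlonglongrightarrow> L"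
  shows "(\<lambda>k. centred_bernoulli_char q (v k) ^ n k) \<longlonglongrightarrow> of_real (exp (- (L * (q * (1 - q))) / 2))"
proof (rule tendsto_power_exp[OF n norm_centred_bernoulli_char_le[OF q]])
  have "L \<ge> 0"
    by (rule LIMSEQ_le_const[OF L]) auto
  then show "- (L * (q * (1 - q))) / 2 \<le> 0"
    using q by simp
  have "(\<lambda>k. (real (n k) * (v k)\<^sup>2) / real (n k)) \<longlonglongrightarrow> 0"
    by (intro tendsto_divide_0[OF L] filterlim_at_top_imp_at_infinity
        filterlim_real_sequentially[THEN filterlim_compose, OF n])
  moreover have "eventually (\<lambda>k. (real (n k) * (v k)\<^sup>2) / real (n k) = (v k)\<^sup>2) sequentially"
    using eventually_gt_at_top[THEN filterlim_iff[THEN iffD1, OF n, rule_format], of 0] by eventually_elim simp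
  ultimately have "(\<lambda>k. (v k)\<^sup>2) \<longlonglongrightarrow> 0"
    by (rule Lim_transform_eventually)
  then have v: "(\<lambda>k. \<bar>v k\<bar>) \<longlonglongrightarrow> 0"
    using tendsto_real_sqrt by fastforce
  define T where "T k = (of_real (1 - (v k)\<^sup>2 * (q * (1 - q)) / 2) :: complex)" for k
  have "of_nat (n k) * (T k - 1) = of_real (- (real (n k) * (v k)\<^sup>2 * (q * (1 - q))) / 2)" for k
    by (simp add: T_def field_simps)
  then have "(\<lambda>k. of_nat (n k) * (T k - 1)) \<longlonglongrightarrow> of_real (- (L * (q * (1 - q))) / 2)"
    by (simp only:) (intro tendsto_intros L, simp)
  moreover have "(\<lambda>k. of_nat (n k) * (centred_bernoulli_char q (v k) - T k)) \<longlonglongrightarrow> 0"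
  proof (rule Lim_null_comparison)
    have "norm (of_nat (n k) * (centred_bernoulli_char q (v k) - T k))
        \<le> real (n k) * (\<bar>v k\<bar> ^ 3 / 6)" for k
      unfolding norm_mult norm_of_nat T_def by (intro mult_left_mono centred_bernoulli_char_approx q) simp
    then show "eventually (\<lambda>k. norm (of_nat (n k) * (centred_bernoulli_char q (v k) - T k))
        \<le> real (n k) * (v k)\<^sup>2 * \<bar>v k\<bar> / 6) sequentially"
      by (simp add: power2_eq_square power3_eq_cube abs_mult_self_eq mult.assoc)
    show "(\<lambda>k. real (n k) * (v k)\<^sup>2 * \<bar>v k\<bar> / 6) \<longlonglongrightarrow> 0"
      using tendsto_mult[OF L v] by (auto intro: tendsto_divide_zero)
  qed
  ultimately show "(\<lambda>k. of_nat (n k) * (centred_bernoulli_char q (v k) - 1))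
      \<longlonglongrightarrow> of_real (- (L * (q * (1 - q))) / 2)"
    using tendsto_add by (fastforce simp: algebra_simps)
qed

section \<open>Convergence in distribution\<close>

lemma tendsto_scaled_increment:
  fixes c :: "nat \<Rightarrow> real"
  assumes D: "(f has_real_derivative D) (at p)" and c: "filterlim c at_top sequentially"
  shows "(\<lambda>k. c k * (f (p + x / c k) - f p)) \<longlonglongrightarrow> x * D"
proof (cases "x = 0")
  case False
  define h where "h k = x / c k" for k
  have c_pos: "eventually (\<lambda>k. 0 < c k) sequentially"
    using c unfolding filterlim_at_top_dense by blast
  have "h \<longlonglongrightarrow> 0"
    unfolding h_def by (intro tendsto_divide_0[OF tendsto_const] filterlim_at_top_imp_at_infinity c)
  moreover have "eventually (\<lambda>k. h k \<noteq> 0) sequentially"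
    using c_pos by eventually_elim (use False in \<open>simp add: h_def\<close>)
  ultimately have "filterlim h (at 0) sequentially"
    by (rule filterlim_atI)
  moreover have "((\<lambda>h. (f (p + h) - f p) / h) \<longlongrightarrow> D) (at 0)"
    using D unfolding DERIV_def .
  ultimately have "(\<lambda>k. (f (p + h k) - f p) / h k) \<longlonglongrightarrow> D"
    by (rule filterlim_compose[rotated])
  then have "(\<lambda>k. x * ((f (p + h k) - f p) / h k)) \<longlonglongrightarrow> x * D"
    by (rule tendsto_mult_left)
  moreover have "eventually (\<lambda>k. x * ((f (p + h k) - f p) / h k) = c k * (f (p + x / c k) - f p)) sequentially"
    using c_pos by eventually_elim (use False in \<open>simp add: h_def field_simps\<close>)
  ultimately show ?thesis
    by (rule Lim_transform_eventually)
qed simp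

lemma tendsto_sandwich_shifted:
  fixes H :: "nat \<Rightarrow> real \<Rightarrow> real" and G :: "nat \<Rightarrow> real"
  assumes H: "\<And>x. (\<lambda>k. H k x) \<longlonglongrightarrow> F x" and F: "isCont F c"
    and G: "\<And>\<eta>. 0 < \<eta> \<Longrightarrow> eventually (\<lambda>k. H k (c - \<eta>) \<le> G k \<and> G k \<le> H k (c + \<eta>)) sequentially"
  shows "G \<longlonglongrightarrow> F c"
proof (rule order_tendstoI)
  fix a assume "a < F c"
  with F have "eventually (\<lambda>x. a < F x) (at c)"
    unfolding isCont_def by (rule order_tendstoD)
  then obtain d where d: "0 < d" "\<And>x. x \<noteq> c \<Longrightarrow> dist x c < d \<Longrightarrow> a < F x"
    unfolding eventually_at by blast
  have "a < F (c - d / 2)"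
    using d by (intro d(2)) (auto simp: dist_real_def)
  then have "eventually (\<lambda>k. a < H k (c - d / 2)) sequentially"
    by (rule order_tendstoD(1)[OF H])
  moreover have "eventually (\<lambda>k. H k (c - d / 2) \<le> G k \<and> G k \<le> H k (c + d / 2)) sequentially"
    using d(1) by (intro G) simp
  ultimately show "eventually (\<lambda>k. a < G k) sequentially"
    by eventually_elim auto
next
  fix a assume "F c < a"
  with F have "eventually (\<lambda>x. F x < a) (at c)"
    unfolding isCont_def by (rule order_tendstoD)
  then obtain d where d: "0 < d" "\<And>x. x \<noteq> c \<Longrightarrow> dist x c < d \<Longrightarrow> F x < a"
    unfolding eventually_at by blast
  have "F (c + d / 2) < a"
    using d by (intro d(2)) (auto simp: dist_real_def)
  then have "eventually (\<lambda>k. H k (c + d / 2) < a) sequentially"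
    by (rule order_tendstoD(2)[OF H])
  moreover have "eventually (\<lambda>k. H k (c - d / 2) \<le> G k \<and> G k \<le> H k (c + d / 2)) sequentially"
    using d(1) by (intro G) simp
  ultimately show "eventually (\<lambda>k. G k < a) sequentially"
    by eventually_elim auto
qed

lemma
  fixes M :: "nat \<Rightarrow> 'a measure" and W :: "nat \<Rightarrow> 'a \<Rightarrow> real"
  assumes M: "\<And>k. prob_space (M k)" and W: "\<And>k. W k \<in> borel_measurable (M k)"
    and wc: "weak_conv_m (\<lambda>k. distr (M k) borel (W k)) \<mu>" and \<mu>: "\<And>x. isCont (cdf \<mu>) x"
    and c: "c \<longlonglongrightarrow> c0"
  shows weak_conv_m_prob_le_tendsto: "(\<lambda>k. measure (M k) {\<omega> \<in> space (M k). W k \<omega> \<le> c k}) \<longlonglongrightarrow> cdf \<mu> c0"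
    and weak_conv_m_prob_less_tendsto: "(\<lambda>k. measure (M k) {\<omega> \<in> space (M k). W k \<omega> < c k}) \<longlonglongrightarrow> cdf \<mu> c0"
proof -
  define H where "H k x = measure (M k) {\<omega> \<in> space (M k). W k \<omega> \<le> x}" for k x
  have "H k x = cdf (distr (M k) borel (W k)) x" for k x
    unfolding H_def cdf_def using W[of k]
    by (subst measure_distr) (auto intro!: arg_cong[where f="measure (M k)"])
  then have H: "(\<lambda>k. H k x) \<longlonglongrightarrow> cdf \<mu> x" for x
    using wc \<mu> unfolding weak_conv_m_def weak_conv_def by simp
  have sets: "{\<omega> \<in> space (M k). W k \<omega> \<le> y} \<in> sets (M k)"
    "{\<omega> \<in> space (M k). W k \<omega> < y} \<in> sets (M k)" for k y
    using W[of k] by measurable measurable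
  have mono: "A \<subseteq> B \<Longrightarrow> B \<in> sets (M k) \<Longrightarrow> measure (M k) A \<le> measure (M k) B" for k A B
  proof -
    interpret prob_space "M k" by (rule M)
    show "A \<subseteq> B \<Longrightarrow> B \<in> sets (M k) \<Longrightarrow> measure (M k) A \<le> measure (M k) B"
      by (rule finite_measure_mono)
  qed
  have near: "eventually (\<lambda>k. c0 - \<eta> < c k \<and> c k < c0 + \<eta>) sequentially" if "0 < \<eta>" for \<eta>
    using order_tendstoD[OF c, of "c0 - \<eta>"] order_tendstoD[OF c, of "c0 + \<eta>"] that
    by (auto elim: eventually_elim2)
  show "(\<lambda>k. measure (M k) {\<omega> \<in> space (M k). W k \<omega> \<le> c k}) \<longlonglongrightarrow> cdf \<mu> c0"
  proof (rule tendsto_sandwich_shifted[OF H \<mu>])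
    fix \<eta> :: real assume "0 < \<eta>"
    from near[OF this] show "eventually (\<lambda>k. H k (c0 - \<eta>) \<le> measure (M k) {\<omega> \<in> space (M k). W k \<omega> \<le> c k}
        \<and> measure (M k) {\<omega> \<in> space (M k). W k \<omega> \<le> c k} \<le> H k (c0 + \<eta>)) sequentially"
      unfolding H_def by eventually_elim (intro conjI mono sets; auto)
  qed
  show "(\<lambda>k. measure (M k) {\<omega> \<in> space (M k). W k \<omega> < c k}) \<longlonglongrightarrow> cdf \<mu> c0"
  proof (rule tendsto_sandwich_shifted[OF H \<mu>])
    fix \<eta> :: real assume "0 < \<eta>"
    from near[OF this] show "eventually (\<lambda>k. H k (c0 - \<eta>) \<le> measure (M k) {\<omega> \<in> space (M k). W k \<omega> < c k}
        \<and> measure (M k) {\<omega> \<in> space (M k). W k \<omega> < c k} \<le> H k (c0 + \<eta>)) sequentially"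
      unfolding H_def by eventually_elim (intro conjI mono sets; auto)
  qed
qed

lemma weak_conv_m_prob_abs_ge_tendsto_0:
  fixes M :: "nat \<Rightarrow> 'a measure" and W :: "nat \<Rightarrow> 'a \<Rightarrow> real"
  assumes M: "\<And>k. prob_space (M k)" and W: "\<And>k. W k \<in> borel_measurable (M k)"
    and wc: "weak_conv_m (\<lambda>k. distr (M k) borel (W k)) \<mu>"
    and \<mu>: "real_distribution \<mu>" "\<And>x. isCont (cdf \<mu>) x"
    and c: "filterlim c at_top sequentially"
  shows "(\<lambda>k. measure (M k) {\<omega> \<in> space (M k). c k \<le> \<bar>W k \<omega>\<bar>}) \<longlonglongrightarrow> 0"
proof (rule tendstoI)
  interpret \<mu>: real_distribution \<mu> by (rule \<mu>)
  fix e :: real assume e: "0 < e"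
  obtain A0 where A0: "\<And>x. x \<le> A0 \<Longrightarrow> cdf \<mu> x < e / 4"
    using order_tendstoD(2)[OF \<mu>.cdf_lim_at_bot, of "e / 4"] e
    unfolding eventually_at_bot_linorder by auto
  obtain A1 where A1: "\<And>x. A1 \<le> x \<Longrightarrow> 1 - e / 4 < cdf \<mu> x"
    using order_tendstoD(1)[OF \<mu>.cdf_lim_at_top_prob, of "1 - e / 4"] e
    unfolding eventually_at_top_linorder by auto
  define A where "A = max 1 (max (- A0) A1)"
  have A: "0 < A" "- A \<le> A0" "A1 \<le> A"
    unfolding A_def by auto
  have "eventually (\<lambda>k. measure (M k) {\<omega> \<in> space (M k). W k \<omega> \<le> - A} < e / 2) sequentially"
    using weak_conv_m_prob_le_tendsto[OF M W wc \<mu>(2) tendsto_const, of "- A"] A0[of "- A"] e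
      \<mu>.cdf_nonneg[of "- A"] A
    by (intro order_tendstoD(2)) auto
  moreover have "eventually (\<lambda>k. 1 - e / 2 < measure (M k) {\<omega> \<in> space (M k). W k \<omega> < A}) sequentially"
    using weak_conv_m_prob_less_tendsto[OF M W wc \<mu>(2) tendsto_const, of A] A1[of A] e A
    by (intro order_tendstoD(1)) auto
  moreover have "eventually (\<lambda>k. A \<le> c k) sequentially"
    using c unfolding filterlim_at_top by blast
  ultimately show "eventually (\<lambda>k. dist (measure (M k) {\<omega> \<in> space (M k). c k \<le> \<bar>W k \<omega>\<bar>}) 0 < e) sequentially"
  proof eventually_elim
    case (elim k)
    interpret prob_space "M k" by (rule M)
    have sets: "{\<omega> \<in> space (M k). W k \<omega> \<le> - A} \<in> events" "{\<omega> \<in> space (M k). W k \<omega> < A} \<in> events"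
      using W[of k] by measurable measurable
    have "{\<omega> \<in> space (M k). c k \<le> \<bar>W k \<omega>\<bar>}
        \<subseteq> {\<omega> \<in> space (M k). W k \<omega> \<le> - A} \<union> (space (M k) - {\<omega> \<in> space (M k). W k \<omega> < A})"
      using elim(3) by auto
    then have "prob {\<omega> \<in> space (M k). c k \<le> \<bar>W k \<omega>\<bar>}
        \<le> prob {\<omega> \<in> space (M k). W k \<omega> \<le> - A} + prob (space (M k) - {\<omega> \<in> space (M k). W k \<omega> < A})"
      using sets by (intro order.trans[OF finite_measure_mono measure_subadditive]) auto
    also have "\<dots> < e"
      using elim(1,2) sets by (simp add: prob_compl)
    finally show ?case by simp
  qed
qed

lemma isCont_cdf_std_normal: "isCont (cdf std_normal_distribution) x"
proof -
  interpret real_distribution std_normal_distribution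
    by (rule real_dist_normal_dist)
  have "emeasure std_normal_distribution {x} = 0"
    by (subst emeasure_density) (auto intro!: nn_integral_null_set)
  then show ?thesis
    by (simp add: isCont_cdf measure_def)
qed

lemma cdf_normal_density:
  assumes \<sigma>: "0 < \<sigma>"
  shows "cdf (density lborel (normal_density 0 \<sigma>)) x = cdf std_normal_distribution (x / \<sigma>)"
proof -
  interpret std: prob_space std_normal_distribution
    by (rule prob_space_normal_density) simp
  have "distributed std_normal_distribution lborel (\<lambda>x. x) std_normal_density"
    unfolding distributed_def by (auto simp: distr_id2)
  then have "distributed std_normal_distribution lborel (\<lambda>x. 0 + \<sigma> * x) (normal_density (0 + \<sigma> * 0) (\<bar>\<sigma>\<bar> * 1))"
    by (rule std.normal_density_affine) (use \<sigma> in auto)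
  then have "density lborel (normal_density 0 \<sigma>) = distr std_normal_distribution lborel (\<lambda>x. \<sigma> * x)"
    using \<sigma> unfolding distributed_def by simp
  then have "cdf (density lborel (normal_density 0 \<sigma>)) x
      = measure std_normal_distribution ((\<lambda>y. \<sigma> * y) -` {..x} \<inter> space std_normal_distribution)"
    unfolding cdf_def by (simp add: measure_distr)
  also have "(\<lambda>y. \<sigma> * y) -` {..x} \<inter> space std_normal_distribution = {..x / \<sigma>}"
    using \<sigma> by (auto simp: field_simps)
  finally show ?thesis
    by (simp add: cdf_def2)
qed

lemma prob_tendsto_between:
  fixes M :: "nat \<Rightarrow> 'a measure"
  assumes M: "\<And>k. prob_space (M k)"
    and sets: "\<And>k. A k \<in> sets (M k)" "\<And>k. B k \<in> sets (M k)" "\<And>k. D k \<in> sets (M k)" "\<And>k. E k \<in> sets (M k)"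
    and between: "eventually (\<lambda>k. A k \<subseteq> E k \<union> D k \<and> E k \<subseteq> B k \<union> D k) sequentially"
    and A: "(\<lambda>k. measure (M k) (A k)) \<longlonglongrightarrow> L" and B: "(\<lambda>k. measure (M k) (B k)) \<longlonglongrightarrow> L"
    and D: "(\<lambda>k. measure (M k) (D k)) \<longlonglongrightarrow> 0"
  shows "(\<lambda>k. measure (M k) (E k)) \<longlonglongrightarrow> L"
proof (rule tendsto_sandwich)
  have "measure (M k) X \<le> measure (M k) Y + measure (M k) (D k)"
    if "X \<subseteq> Y \<union> D k" "Y \<in> sets (M k)" for k X Y
  proof -
    interpret prob_space "M k" by (rule M)
    show ?thesis
      using that sets(3) by (intro order.trans[OF finite_measure_mono measure_subadditive]) auto
  qed
  note le = this
  show "eventually (\<lambda>k. measure (M k) (A k) - measure (M k) (D k) \<le> measure (M k) (E k)) sequentially"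
    using between
  proof eventually_elim
    case (elim k)
    then show ?case
      using le[of "A k" "E k" k] sets(4)[of k] by simp
  qed
  show "eventually (\<lambda>k. measure (M k) (E k) \<le> measure (M k) (B k) + measure (M k) (D k)) sequentially"
    using between
  proof eventually_elim
    case (elim k)
    then show ?case
      using le[of "E k" "B k" k] sets(2)[of k] by simp
  qed
  show "(\<lambda>k. measure (M k) (A k) - measure (M k) (D k)) \<longlonglongrightarrow> L"
    "(\<lambda>k. measure (M k) (B k) + measure (M k) (D k)) \<longlonglongrightarrow> L"
    using tendsto_diff[OF A D] tendsto_add[OF B D] by simp_all
qed

section \<open>Stratified counts\<close>

locale stratified_counts =
  fixes m :: nat and t :: real and q :: "nat \<Rightarrow> real" and nr :: "nat \<Rightarrow> nat \<Rightarrow> nat"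
    and lam :: "nat \<Rightarrow> real" and M :: "nat \<Rightarrow> 'a measure"
    and Y :: "nat \<Rightarrow> nat \<Rightarrow> nat \<Rightarrow> 'a \<Rightarrow> real"
  assumes m_pos: "1 \<le> m"
    and prob_space_M: "\<And>k. prob_space (M k)"
    and indep: "\<And>k. prob_space.indep_vars (M k) (\<lambda>_. borel) (\<lambda>(r, j). Y k r j)
                      {(r, j). r \<in> {1..m} \<and> j < nr k r}"
    and prob_le_t: "\<And>k r j. r \<in> {1..m} \<Longrightarrow> j < nr k r \<Longrightarrow>
                      measure (M k) {\<omega> \<in> space (M k). Y k r j \<omega> \<le> t} = q r"
    and q_bounds: "\<And>r. r \<in> {1..m} \<Longrightarrow> 0 < q r \<and> q r < 1"
    and nr_tendsto: "\<And>r. r \<in> {1..m} \<Longrightarrow> filterlim (\<lambda>k. nr k r) at_top sequentially"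
    and nr_fraction: "\<And>r. r \<in> {1..m} \<Longrightarrow>
                      (\<lambda>k. real (nr k r) / real (\<Sum>s = 1..m. nr k s)) \<longlonglongrightarrow> lam r"
    and lam_pos: "\<And>r. r \<in> {1..m} \<Longrightarrow> 0 < lam r"
begin

definition stratum_count :: "nat \<Rightarrow> nat \<Rightarrow> 'a \<Rightarrow> nat" where
  "stratum_count k r \<omega> = (\<Sum>j<nr k r. if Y k r j \<omega> \<le> t then 1 else 0)"

definition sample_size :: "nat \<Rightarrow> nat" where
  "sample_size k = (\<Sum>s = 1..m. nr k s)"

definition deviation_event :: "real \<Rightarrow> nat \<Rightarrow> 'a set" where
  "deviation_event \<eta> k = (\<Union>r\<in>{1..m}. {\<omega> \<in> space (M k).
     \<eta> * real (nr k r) < \<bar>real (stratum_count k r \<omega>) - real (nr k r) * q r\<bar>})"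

lemma measurable_Y [measurable]:
  assumes "r \<in> {1..m}" "j < nr k r"
  shows "Y k r j \<in> borel_measurable (M k)"
proof -
  interpret prob_space "M k" by (rule prob_space_M)
  show ?thesis
    using indep[of k] assms unfolding indep_vars_def2 by auto
qed

lemma measurable_stratum_count [measurable]:
  "r \<in> {1..m} \<Longrightarrow> (\<lambda>\<omega>. real (stratum_count k r \<omega>)) \<in> borel_measurable (M k)"
  unfolding stratum_count_def by measurable

lemma deviation_event_sets: "deviation_event \<eta> k \<in> sets (M k)"
  unfolding deviation_event_def by (intro sets.finite_UN) auto

lemma char_centred_indicator:
  assumes "r \<in> {1..m}" "j < nr k r"
  shows "char (distr (M k) borel (\<lambda>\<omega>. c * ((if Y k r j \<omega> \<le> t then 1 else 0) - q r))) u
    = centred_bernoulli_char (q r) (u * c)"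
proof -
  interpret prob_space "M k" by (rule prob_space_M)
  define A where "A = {\<omega> \<in> space (M k). Y k r j \<omega> \<le> t}"
  have A: "A \<in> events"
    unfolding A_def using assms by measurable
  define e1 e0 where "e1 = iexp (u * c * (1 - q r))" and "e0 = iexp (- (u * c * q r))"
  have "char (distr (M k) borel (\<lambda>\<omega>. c * ((if Y k r j \<omega> \<le> t then 1 else 0) - q r))) u
      = (CLINT \<omega>|M k. iexp (u * (c * ((if Y k r j \<omega> \<le> t then 1 else 0) - q r))))"
    unfolding char_def using assms by (simp add: integral_distr)
  also have "\<dots> = (CLINT \<omega>|M k. e0 + indicator A \<omega> *\<^sub>R (e1 - e0))"
    by (intro Bochner_Integration.integral_cong) (auto simp: A_def e0_def e1_def algebra_simps)
  also have "\<dots> = e0 + prob A *\<^sub>R (e1 - e0)"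
  proof -
    have "integrable (M k) (indicator A :: 'a \<Rightarrow> real)"
      using A by (intro integrable_real_indicator) (auto simp: less_top[symmetric])
    then show ?thesis
      using A by (subst Bochner_Integration.integral_add) (auto simp: prob_space)
  qed
  also have "\<dots> = centred_bernoulli_char (q r) (u * c)"
    using prob_le_t[OF assms] unfolding A_def centred_bernoulli_char_def e1_def e0_def
    by (simp add: scaleR_conv_of_real algebra_simps)
  finally show ?thesis .
qed

lemma char_weighted_counts:
  "char (distr (M k) borel (\<lambda>\<omega>. \<Sum>r=1..m. c r * (real (stratum_count k r \<omega>) - real (nr k r) * q r))) u
    = (\<Prod>r=1..m. centred_bernoulli_char (q r) (u * c r) ^ nr k r)"
proof -
  interpret prob_space "M k" by (rule prob_space_M)
  define U where "U = Sigma {1..m} (\<lambda>r. {..<nr k r})"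
  define Z where "Z i \<omega> = (case i of (r, j) \<Rightarrow> c r * ((if Y k r j \<omega> \<le> t then 1 else 0) - q r))" for i \<omega>
  have U: "{(r, j). r \<in> {1..m} \<and> j < nr k r} = U"
    unfolding U_def by auto
  have "indep_vars (\<lambda>_. borel) (\<lambda>i \<omega>. (\<lambda>(r, j) y. c r * ((if y \<le> t then 1 else 0) - q r)) i
      ((\<lambda>(r, j). Y k r j) i \<omega>)) U"
    using indep[of k] unfolding U by (rule indep_vars_compose2) (auto split: prod.splits)
  moreover have "(\<lambda>i \<omega>. (\<lambda>(r, j) y. c r * ((if y \<le> t then 1 else 0) - q r)) i ((\<lambda>(r, j). Y k r j) i \<omega>)) = Z"
    by (auto simp: Z_def fun_eq_iff split: prod.splits)
  ultimately have indep_Z: "indep_vars (\<lambda>_. borel) Z U"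
    by simp
  have "real (stratum_count k r \<omega>) - real (nr k r) * q r = (\<Sum>j<nr k r. (if Y k r j \<omega> \<le> t then 1 else 0) - q r)"
    for r \<omega>
    by (simp add: stratum_count_def sum_subtractf of_nat_sum if_distrib[of real] cong: if_cong)
  then have "(\<Sum>r=1..m. c r * (real (stratum_count k r \<omega>) - real (nr k r) * q r)) = (\<Sum>i\<in>U. Z i \<omega>)" for \<omega>
    by (simp add: U_def Z_def sum.Sigma[symmetric] sum_distrib_left)
  then have "char (distr (M k) borel (\<lambda>\<omega>. \<Sum>r=1..m. c r * (real (stratum_count k r \<omega>) - real (nr k r) * q r))) u
      = char (distr (M k) borel (\<lambda>\<omega>. \<Sum>i\<in>U. Z i \<omega>)) u"
    by simp
  also have "\<dots> = (\<Prod>i\<in>U. char (distr (M k) borel (Z i)) u)"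
    by (rule char_distr_sum[OF indep_Z])
  also have "\<dots> = (\<Prod>(r, j)\<in>U. centred_bernoulli_char (q r) (u * c r))"
    by (intro prod.cong) (auto simp: U_def Z_def[abs_def] char_centred_indicator)
  also have "\<dots> = (\<Prod>r=1..m. centred_bernoulli_char (q r) (u * c r) ^ nr k r)"
    unfolding U_def by (simp add: prod.Sigma[symmetric])
  finally show ?thesis .
qed

lemma sample_size_tendsto: "filterlim (\<lambda>k. real (sample_size k)) at_top sequentially"
proof -
  have "filterlim (\<lambda>k. real (nr k 1)) at_top sequentially"
    using m_pos by (intro filterlim_compose[OF filterlim_real_sequentially nr_tendsto]) auto
  moreover have "nr k 1 \<le> sample_size k" for k
    unfolding sample_size_def using m_pos by (intro member_le_sum) auto
  ultimately show ?thesis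
    by (auto intro: filterlim_at_top_mono[OF _ always_eventually])
qed

lemma eventually_sample_size_pos: "eventually (\<lambda>k. 0 < sample_size k) sequentially"
  using filterlim_at_top_dense[THEN iffD1, OF sample_size_tendsto, rule_format, of 0] by simp

lemma measurable_weighted_counts [measurable]:
  "(\<lambda>\<omega>. \<Sum>r=1..m. c r * (real (stratum_count k r \<omega>) - real (nr k r) * q r)) \<in> borel_measurable (M k)"
  by (intro borel_measurable_sum) auto

lemma stratum_char_power_tendsto:
  assumes r: "r \<in> {1..m}" and a: "a \<longlonglongrightarrow> \<alpha>" and s: "0 < s"
  shows "(\<lambda>k. centred_bernoulli_char (q r) (u * (a k / (sqrt (sample_size k) * s))) ^ nr k r)
    \<longlonglongrightarrow> of_real (exp (- (u\<^sup>2 * \<alpha>\<^sup>2 * lam r / s\<^sup>2 * (q r * (1 - q r))) / 2))"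
proof (rule centred_bernoulli_char_power_tendsto)
  show "0 \<le> q r" "q r \<le> 1"
    using q_bounds[OF r] by auto
  show "filterlim (\<lambda>k. nr k r) at_top sequentially"
    by (rule nr_tendsto[OF r])
  have "(\<lambda>k. u\<^sup>2 * (a k)\<^sup>2 * (real (nr k r) / real (sample_size k)) / s\<^sup>2) \<longlonglongrightarrow> u\<^sup>2 * \<alpha>\<^sup>2 * lam r / s\<^sup>2"
    unfolding sample_size_def using nr_fraction[OF r] a s by (intro tendsto_intros) auto
  moreover have "eventually (\<lambda>k. u\<^sup>2 * (a k)\<^sup>2 * (real (nr k r) / real (sample_size k)) / s\<^sup>2
      = real (nr k r) * (u * (a k / (sqrt (sample_size k) * s)))\<^sup>2) sequentially"
    using eventually_sample_size_pos by eventually_elim (use s in \<open>simp add: power2_eq_square field_simps\<close>)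
  ultimately show "(\<lambda>k. real (nr k r) * (u * (a k / (sqrt (sample_size k) * s)))\<^sup>2)
      \<longlonglongrightarrow> u\<^sup>2 * \<alpha>\<^sup>2 * lam r / s\<^sup>2"
    by (rule Lim_transform_eventually)
qed

lemma weighted_counts_clt:
  assumes a: "\<And>r. r \<in> {1..m} \<Longrightarrow> (\<lambda>k. a k r) \<longlonglongrightarrow> \<alpha> r"
    and s: "0 < s" "s\<^sup>2 = (\<Sum>r=1..m. (\<alpha> r)\<^sup>2 * lam r * (q r * (1 - q r)))"
  shows "weak_conv_m (\<lambda>k. distr (M k) borel (\<lambda>\<omega>.
      (\<Sum>r=1..m. a k r * (real (stratum_count k r \<omega>) - real (nr k r) * q r)) / (sqrt (sample_size k) * s)))
    std_normal_distribution"
proof (rule levy_continuity)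
  fix k
  interpret prob_space "M k" by (rule prob_space_M)
  show "real_distribution (distr (M k) borel (\<lambda>\<omega>.
      (\<Sum>r=1..m. a k r * (real (stratum_count k r \<omega>) - real (nr k r) * q r)) / (sqrt (sample_size k) * s)))"
    by (intro real_distribution_distr) measurable
next
  fix u :: real
  have "(\<lambda>k. \<Prod>r=1..m. centred_bernoulli_char (q r) (u * (a k r / (sqrt (sample_size k) * s))) ^ nr k r)
      \<longlonglongrightarrow> (\<Prod>r=1..m. of_real (exp (- (u\<^sup>2 * (\<alpha> r)\<^sup>2 * lam r / s\<^sup>2 * (q r * (1 - q r))) / 2)))"
    using a s(1) by (intro tendsto_prod stratum_char_power_tendsto) auto
  also have "(\<Prod>r=1..m. of_real (exp (- (u\<^sup>2 * (\<alpha> r)\<^sup>2 * lam r / s\<^sup>2 * (q r * (1 - q r))) / 2)) :: complex)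
      = of_real (exp (- (u\<^sup>2 / s\<^sup>2) / 2 * (\<Sum>r=1..m. (\<alpha> r)\<^sup>2 * lam r * (q r * (1 - q r)))))"
    by (simp add: exp_sum sum_distrib_left field_simps flip: of_real_prod)
  also have "- (u\<^sup>2 / s\<^sup>2) / 2 * (\<Sum>r=1..m. (\<alpha> r)\<^sup>2 * lam r * (q r * (1 - q r))) = - (u\<^sup>2) / 2"
    unfolding s(2)[symmetric] using s(1) by simp
  finally have lim: "(\<lambda>k. \<Prod>r=1..m. centred_bernoulli_char (q r) (u * (a k r / (sqrt (sample_size k) * s))) ^ nr k r)
      \<longlonglongrightarrow> of_real (exp (- (u\<^sup>2) / 2))" .
  have "(\<lambda>\<omega>. (\<Sum>r=1..m. a k r * (real (stratum_count k r \<omega>) - real (nr k r) * q r)) / (sqrt (sample_size k) * s))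
      = (\<lambda>\<omega>. \<Sum>r=1..m. (a k r / (sqrt (sample_size k) * s)) * (real (stratum_count k r \<omega>) - real (nr k r) * q r))" for k
    by (simp add: sum_divide_distrib fun_eq_iff)
  with lim show "(\<lambda>k. char (distr (M k) borel (\<lambda>\<omega>.
      (\<Sum>r=1..m. a k r * (real (stratum_count k r \<omega>) - real (nr k r) * q r)) / (sqrt (sample_size k) * s))) u)
    \<longlonglongrightarrow> char std_normal_distribution u"
    by (simp only: char_weighted_counts char_std_normal_distribution)
qed (rule real_dist_normal_dist)

lemma stratum_count_deviation_tendsto_0:
  assumes r: "r \<in> {1..m}" and \<epsilon>: "0 < \<epsilon>"
  shows "(\<lambda>k. measure (M k) {\<omega> \<in> space (M k).
      \<epsilon> * real (sample_size k) \<le> \<bar>real (stratum_count k r \<omega>) - real (nr k r) * q r\<bar>}) \<longlonglongrightarrow> 0"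
proof -
  define s where "s = sqrt (lam r * (q r * (1 - q r)))"
  have s: "0 < s"
    unfolding s_def using q_bounds[OF r] lam_pos[OF r] by simp
  define W where "W k \<omega> = (\<Sum>r'=1..m. (if r' = r then 1 else 0) *
      (real (stratum_count k r' \<omega>) - real (nr k r') * q r')) / (sqrt (sample_size k) * s)" for k \<omega>
  have W: "W k \<omega> = (real (stratum_count k r \<omega>) - real (nr k r) * q r) / (sqrt (sample_size k) * s)" for k \<omega>
    using r by (simp add: W_def if_distrib[where f="\<lambda>x. x * _"] cong: if_cong)
  have "(\<Sum>r'=1..m. (if r' = r then 1 else 0)\<^sup>2 * lam r' * (q r' * (1 - q r')))
      = (\<Sum>r'\<in>{1..m}. if r' = r then lam r' * (q r' * (1 - q r')) else 0)"
    by (intro sum.cong) auto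
  with r s have "weak_conv_m (\<lambda>k. distr (M k) borel (W k)) std_normal_distribution"
    unfolding W_def
    by (intro weighted_counts_clt[where \<alpha>="\<lambda>r'. if r' = r then 1 else 0"]) (auto simp: s_def)
  moreover have "filterlim (\<lambda>k. \<epsilon> / s * sqrt (sample_size k)) at_top sequentially"
    using \<epsilon> s by (intro filterlim_tendsto_pos_mult_at_top[OF tendsto_const]
      filterlim_compose[OF sqrt_at_top sample_size_tendsto]) auto
  moreover have "W k \<in> borel_measurable (M k)" for k
    unfolding W_def by measurable
  ultimately have "(\<lambda>k. measure (M k) {\<omega> \<in> space (M k). \<epsilon> / s * sqrt (sample_size k) \<le> \<bar>W k \<omega>\<bar>}) \<longlonglongrightarrow> 0"
    by (intro weak_conv_m_prob_abs_ge_tendsto_0[OF prob_space_M _ _ real_dist_normal_dist isCont_cdf_std_normal])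
  moreover have "eventually (\<lambda>k. measure (M k) {\<omega> \<in> space (M k). \<epsilon> / s * sqrt (sample_size k) \<le> \<bar>W k \<omega>\<bar>}
      = measure (M k) {\<omega> \<in> space (M k). \<epsilon> * real (sample_size k) \<le> \<bar>real (stratum_count k r \<omega>) - real (nr k r) * q r\<bar>})
      sequentially"
    using eventually_sample_size_pos
  proof eventually_elim
    case (elim k)
    have "\<epsilon> / s * sqrt (sample_size k) * (sqrt (sample_size k) * s) = \<epsilon> * real (sample_size k)"
      using s by (simp add: field_simps)
    moreover have "0 < sqrt (sample_size k) * s"
      using elim s by simp
    ultimately have "\<epsilon> / s * sqrt (sample_size k) \<le> \<bar>W k \<omega>\<bar>
        \<longleftrightarrow> \<epsilon> * real (sample_size k) \<le> \<bar>real (stratum_count k r \<omega>) - real (nr k r) * q r\<bar>" for \<omega>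
      by (simp add: W abs_divide pos_le_divide_eq)
    then show ?case
      by (intro arg_cong[where f="measure (M k)"]) blast
  qed
  ultimately show ?thesis
    by (rule Lim_transform_eventually)
qed

lemma deviation_event_prob_tendsto_0:
  assumes \<eta>: "0 < \<eta>"
  shows "(\<lambda>k. measure (M k) (deviation_event \<eta> k)) \<longlonglongrightarrow> 0"
proof -
  define E where "E k r = {\<omega> \<in> space (M k).
      \<eta> * lam r / 2 * real (sample_size k) \<le> \<bar>real (stratum_count k r \<omega>) - real (nr k r) * q r\<bar>}" for k r
  have "eventually (\<lambda>k. lam r / 2 * real (sample_size k) \<le> real (nr k r)) sequentially" if r: "r \<in> {1..m}" for r
  proof -
    have "eventually (\<lambda>k. lam r / 2 < real (nr k r) / real (sample_size k)) sequentially"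
      using order_tendstoD(1)[OF nr_fraction[OF r], of "lam r / 2"] lam_pos[OF r] by (simp add: sample_size_def)
    with eventually_sample_size_pos show ?thesis
      by eventually_elim (simp add: pos_less_divide_eq less_imp_le)
  qed
  then have "eventually (\<lambda>k. \<forall>r\<in>{1..m}. lam r / 2 * real (sample_size k) \<le> real (nr k r)) sequentially"
    by (simp add: eventually_ball_finite_distrib)
  then have le: "eventually (\<lambda>k. measure (M k) (deviation_event \<eta> k) \<le> (\<Sum>r=1..m. measure (M k) (E k r))) sequentially"
  proof eventually_elim
    case (elim k)
    interpret prob_space "M k" by (rule prob_space_M)
    have "deviation_event \<eta> k \<subseteq> (\<Union>r\<in>{1..m}. E k r)"
    proof
      fix \<omega> assume "\<omega> \<in> deviation_event \<eta> k"
      then obtain r where r: "r \<in> {1..m}" "\<omega> \<in> space (M k)"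
        and dev: "\<eta> * real (nr k r) < \<bar>real (stratum_count k r \<omega>) - real (nr k r) * q r\<bar>"
        unfolding deviation_event_def by auto
      have "\<eta> * (lam r / 2 * real (sample_size k)) \<le> \<eta> * real (nr k r)"
        using elim r \<eta> by (intro mult_left_mono) auto
      with r dev show "\<omega> \<in> (\<Union>r\<in>{1..m}. E k r)"
        unfolding E_def by force
    qed
    moreover have "E k r \<in> events" if "r \<in> {1..m}" for r
      unfolding E_def using that by measurable
    ultimately show ?case
      by (intro order.trans[OF finite_measure_mono measure_UNION_le]) auto
  qed
  have lim: "(\<lambda>k. \<Sum>r=1..m. measure (M k) (E k r)) \<longlonglongrightarrow> 0"
    unfolding E_def
  proof (intro tendsto_null_sum stratum_count_deviation_tendsto_0)
    show "0 < \<eta> * lam r / 2" if "r \<in> {1..m}" for r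
      using \<eta> lam_pos[OF that] by simp
  qed
  show ?thesis
    by (rule tendsto_sandwich[OF _ le tendsto_const lim]) simp
qed

end

section \<open>The MinPNS likelihood\<close>

definition score_weight :: "nat \<Rightarrow> nat \<Rightarrow> real \<Rightarrow> real" where
  "score_weight m r p = bmix m r p / (Bmix m r p * (1 - Bmix m r p))"

definition score_weight' :: "nat \<Rightarrow> nat \<Rightarrow> real \<Rightarrow> real" where
  "score_weight' m r p =
     (bmix' m r p * (Bmix m r p * (1 - Bmix m r p)) - bmix m r p * (bmix m r p * (1 - 2 * Bmix m r p)))
     / (Bmix m r p * (1 - Bmix m r p))\<^sup>2"

definition loglik :: "nat \<Rightarrow> (nat \<Rightarrow> nat) \<Rightarrow> (nat \<Rightarrow> nat) \<Rightarrow> real \<Rightarrow> real" where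
  "loglik m n y p =
     (\<Sum>r=1..m. real (y r) * ln (Bmix m r p) + (real (n r) - real (y r)) * ln (1 - Bmix m r p))"

definition score :: "nat \<Rightarrow> (nat \<Rightarrow> nat) \<Rightarrow> (nat \<Rightarrow> nat) \<Rightarrow> real \<Rightarrow> real" where
  "score m n y p = (\<Sum>r=1..m. score_weight m r p * (real (y r) - real (n r) * Bmix m r p))"

definition score' :: "nat \<Rightarrow> (nat \<Rightarrow> nat) \<Rightarrow> (nat \<Rightarrow> nat) \<Rightarrow> real \<Rightarrow> real" where
  "score' m n y p = (\<Sum>r=1..m. score_weight' m r p * (real (y r) - real (n r) * Bmix m r p)
     - real (n r) * (score_weight m r p * bmix m r p))"

lemma score_weight_pos: "r \<in> {1..m} \<Longrightarrow> 0 < p \<Longrightarrow> p < 1 \<Longrightarrow> 0 < score_weight m r p"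
  unfolding score_weight_def using Bmix_bounds[of r m p] bmix_pos[of r m p] by simp

lemma score_weight_has_real_derivative:
  assumes "r \<in> {1..m}" "0 < p" "p < 1"
  shows "(score_weight m r has_real_derivative score_weight' m r p) (at p)"
  unfolding score_weight_def[abs_def] score_weight'_def using Bmix_bounds[OF assms]
  by (auto intro!: derivative_eq_intros bmix_has_real_derivative Bmix_has_real_derivative assms
      simp: power2_eq_square algebra_simps)

lemma isCont_score_weight:
  "r \<in> {1..m} \<Longrightarrow> 0 < p \<Longrightarrow> p < 1 \<Longrightarrow> isCont (score_weight m r) p"
  using score_weight_has_real_derivative DERIV_isCont by blast

lemma isCont_score_weight':
  assumes "r \<in> {1..m}" "0 < p" "p < 1"
  shows "isCont (score_weight' m r) p"
  unfolding score_weight'_def[abs_def] using Bmix_bounds[OF assms]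
  by (intro continuous_intros isCont_Bmix assms) auto

lemma loglik_has_real_derivative:
  assumes "0 < p" "p < 1"
  shows "(loglik m n y has_real_derivative score m n y p) (at p)"
  unfolding loglik_def[abs_def] score_def
proof (intro DERIV_sum)
  fix r assume r: "r \<in> {1..m}"
  have B: "0 < Bmix m r p" "Bmix m r p < 1"
    using Bmix_bounds[OF r assms] by auto
  have "((\<lambda>p. real (y r) * ln (Bmix m r p) + (real (n r) - real (y r)) * ln (1 - Bmix m r p))
      has_real_derivative real (y r) * (bmix m r p / Bmix m r p)
        + (real (n r) - real (y r)) * (- bmix m r p / (1 - Bmix m r p))) (at p)"
  proof (intro DERIV_add DERIV_cmult)
    show "((\<lambda>p. ln (Bmix m r p)) has_real_derivative bmix m r p / Bmix m r p) (at p)"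
      using DERIV_chain2[OF DERIV_ln_divide Bmix_has_real_derivative[OF assms]] B by simp
    have "((\<lambda>p. 1 - Bmix m r p) has_real_derivative - bmix m r p) (at p)"
      by (auto intro!: derivative_eq_intros Bmix_has_real_derivative assms)
    from DERIV_chain2[OF DERIV_ln_divide this]
    show "((\<lambda>p. ln (1 - Bmix m r p)) has_real_derivative - bmix m r p / (1 - Bmix m r p)) (at p)"
      using B by simp
  qed
  also have "real (y r) * (bmix m r p / Bmix m r p) + (real (n r) - real (y r)) * (- bmix m r p / (1 - Bmix m r p))
      = score_weight m r p * (real (y r) - real (n r) * Bmix m r p)"
    unfolding score_weight_def using B by (simp add: field_simps)
  finally show "((\<lambda>p. real (y r) * ln (Bmix m r p) + (real (n r) - real (y r)) * ln (1 - Bmix m r p))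
      has_real_derivative score_weight m r p * (real (y r) - real (n r) * Bmix m r p)) (at p)" .
qed

lemma score_has_real_derivative:
  assumes "0 < p" "p < 1"
  shows "(score m n y has_real_derivative score' m n y p) (at p)"
  unfolding score_def[abs_def] score'_def
  by (intro DERIV_sum) (auto intro!: derivative_eq_intros score_weight_has_real_derivative
      Bmix_has_real_derivative assms simp: algebra_simps)

lemma minpns_lik_eq_exp_loglik:
  assumes "0 < p" "p < 1" and y: "\<And>r. r \<in> {1..m} \<Longrightarrow> y r \<le> n r"
  shows "minpns_lik m n y p = (\<Prod>r=1..m. real (n r choose y r)) * exp (loglik m n y p)"
proof -
  have exp_ln_power: "exp (real k * ln x) = x ^ k" if "0 < x" for k x
    using that by (simp add: exp_of_nat_mult)
  have "Bmix m r p ^ y r * (1 - Bmix m r p) ^ (n r - y r)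
      = exp (real (y r) * ln (Bmix m r p) + (real (n r) - real (y r)) * ln (1 - Bmix m r p))"
    if r: "r \<in> {1..m}" for r
    using Bmix_bounds[OF r assms(1,2)] y[OF r]
    by (simp only: exp_add of_nat_diff[symmetric] exp_ln_power diff_gt_0_iff_gt)
  then have "minpns_lik m n y p = (\<Prod>r=1..m. real (n r choose y r)
      * exp (real (y r) * ln (Bmix m r p) + (real (n r) - real (y r)) * ln (1 - Bmix m r p)))"
    unfolding minpns_lik_def by (intro prod.cong) (simp_all only: mult.assoc)
  then show ?thesis
    by (simp only: loglik_def exp_sum finite_atLeastAtMost prod.distrib)
qed


text \<open>On \<open>[lo, hi]\<close> the log-likelihood is strictly concave, and the bounds on the counts make the
  score nonnegative below \<open>lo\<close> and nonpositive above \<open>hi\<close>; so the sign of the score at a point of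
  the window tells on which side of it every maximiser of the likelihood lies.\<close>

locale concave_window =
  fixes m :: nat and n y :: "nat \<Rightarrow> nat" and lo hi :: real
  assumes m_pos: "1 \<le> m"
    and lo_pos: "0 < lo" and lo_le_hi: "lo \<le> hi" and hi_less_1: "hi < 1"
    and n_pos: "\<And>r. r \<in> {1..m} \<Longrightarrow> 0 < n r"
    and y_ge: "\<And>r. r \<in> {1..m} \<Longrightarrow> Bmix m r lo * real (n r) \<le> real (y r)"
    and y_le: "\<And>r. r \<in> {1..m} \<Longrightarrow> real (y r) \<le> Bmix m r hi * real (n r)"
    and score_decreasing: "\<And>a b. lo \<le> a \<Longrightarrow> a < b \<Longrightarrow> b \<le> hi \<Longrightarrow> score m n y b < score m n y a"
begin

lemma y_bounds:
  assumes r: "r \<in> {1..m}"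
  shows "0 < y r" "y r < n r"
proof -
  have "0 < Bmix m r lo" "Bmix m r hi < 1"
    using Bmix_bounds[OF r] lo_pos lo_le_hi hi_less_1 by auto
  then have "0 < Bmix m r lo * real (n r)" "Bmix m r hi * real (n r) < real (n r)"
    using n_pos[OF r] by auto
  then show "0 < y r" "y r < n r"
    using y_ge[OF r] y_le[OF r] by linarith+
qed

lemma minpns_lik_le_iff:
  assumes "0 < p" "p < 1" "0 < p'" "p' < 1"
  shows "minpns_lik m n y p \<le> minpns_lik m n y p' \<longleftrightarrow> loglik m n y p \<le> loglik m n y p'"
    and "minpns_lik m n y p < minpns_lik m n y p' \<longleftrightarrow> loglik m n y p < loglik m n y p'"
proof -
  have "0 < (\<Prod>r=1..m. real (n r choose y r))"
    using y_bounds by (intro prod_pos) (auto simp: less_imp_le)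
  moreover note minpns_lik_eq_exp_loglik[OF _ _ less_imp_le[OF y_bounds(2)]]
  ultimately show "minpns_lik m n y p \<le> minpns_lik m n y p' \<longleftrightarrow> loglik m n y p \<le> loglik m n y p'"
    "minpns_lik m n y p < minpns_lik m n y p' \<longleftrightarrow> loglik m n y p < loglik m n y p'"
    using assms by simp_all
qed

lemma minpns_lik_nonneg: "0 \<le> p \<Longrightarrow> p \<le> 1 \<Longrightarrow> 0 \<le> minpns_lik m n y p"
  unfolding minpns_lik_def
  using Bmix_mono[of _ m 0 p] Bmix_mono[of _ m p 1] Bmix_1[of _ m] by (intro prod_nonneg) auto

lemma minpns_lik_0: "minpns_lik m n y 0 = 0"
  unfolding minpns_lik_def using m_pos y_bounds(1)[of 1] by (intro prod_zero bexI[of _ 1]) auto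

lemma minpns_lik_1: "minpns_lik m n y 1 = 0"
  unfolding minpns_lik_def using m_pos y_bounds(2)[of 1] by (intro prod_zero bexI[of _ 1]) (auto simp: Bmix_1)

lemma loglik_mono_on:
  assumes "0 < a" "a \<le> b" "b < 1" and "\<And>x. a \<le> x \<Longrightarrow> x \<le> b \<Longrightarrow> 0 \<le> score m n y x"
  shows "loglik m n y a \<le> loglik m n y b"
proof (rule DERIV_nonneg_imp_nondecreasing[OF assms(2)])
  fix x assume "a \<le> x" "x \<le> b"
  with assms show "\<exists>d. (loglik m n y has_real_derivative d) (at x) \<and> 0 \<le> d"
    by (intro exI[of _ "score m n y x"] conjI loglik_has_real_derivative) auto
qed

lemma loglik_antimono_on:
  assumes "0 < a" "a \<le> b" "b < 1" and "\<And>x. a \<le> x \<Longrightarrow> x \<le> b \<Longrightarrow> score m n y x \<le> 0"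
  shows "loglik m n y b \<le> loglik m n y a"
proof (rule DERIV_nonpos_imp_nonincreasing[OF assms(2)])
  fix x assume "a \<le> x" "x \<le> b"
  with assms show "\<exists>d. (loglik m n y has_real_derivative d) (at x) \<and> d \<le> 0"
    by (intro exI[of _ "score m n y x"] conjI loglik_has_real_derivative) auto
qed

lemma minpns_lik_le_lo:
  assumes "0 \<le> p" "p \<le> lo"
  shows "minpns_lik m n y p \<le> minpns_lik m n y lo"
proof (cases "p = 0")
  case True
  then show ?thesis
    using minpns_lik_0 minpns_lik_nonneg[of lo] lo_pos lo_le_hi hi_less_1 by simp
next
  case False
  have "0 \<le> score m n y x" if "0 < x" "x \<le> lo" for x
    unfolding score_def
  proof (intro sum_nonneg mult_nonneg_nonneg)
    fix r assume r: "r \<in> {1..m}"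
    show "0 \<le> score_weight m r x"
      using score_weight_pos[OF r] that lo_le_hi hi_less_1 by (simp add: less_imp_le)
    have "Bmix m r x * real (n r) \<le> Bmix m r lo * real (n r)"
      using r that lo_le_hi hi_less_1 by (intro mult_right_mono Bmix_mono) auto
    then show "0 \<le> real (y r) - real (n r) * Bmix m r x"
      using y_ge[OF r] by (simp add: mult.commute)
  qed
  then have "loglik m n y p \<le> loglik m n y lo"
    using False assms lo_le_hi hi_less_1 by (intro loglik_mono_on) auto
  then show ?thesis
    using False assms lo_le_hi hi_less_1 by (subst minpns_lik_le_iff) auto
qed

lemma minpns_lik_le_hi:
  assumes "hi \<le> p" "p \<le> 1"
  shows "minpns_lik m n y p \<le> minpns_lik m n y hi"
proof (cases "p = 1")
  case True
  then show ?thesis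
    using minpns_lik_1 minpns_lik_nonneg[of hi] lo_pos lo_le_hi hi_less_1 by simp
next
  case False
  have "score m n y x \<le> 0" if "hi \<le> x" "x < 1" for x
    unfolding score_def
  proof (intro sum_nonpos mult_nonneg_nonpos)
    fix r assume r: "r \<in> {1..m}"
    show "0 \<le> score_weight m r x"
      using score_weight_pos[OF r] that lo_pos lo_le_hi by (simp add: less_imp_le)
    have "Bmix m r hi * real (n r) \<le> Bmix m r x * real (n r)"
      using r that lo_pos lo_le_hi by (intro mult_right_mono Bmix_mono) auto
    then show "real (y r) - real (n r) * Bmix m r x \<le> 0"
      using y_le[OF r] by (simp add: mult.commute)
  qed
  then have "loglik m n y p \<le> loglik m n y hi"
    using False assms lo_pos lo_le_hi by (intro loglik_antimono_on) auto
  then show ?thesis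
    using False assms lo_pos lo_le_hi by (subst minpns_lik_le_iff) auto
qed

lemma argmax_less_if_score_neg:
  assumes p1: "lo \<le> p1" "p1 \<le> hi" and neg: "score m n y p1 < 0"
    and F: "F \<in> {0..1}" and F_max: "\<And>p. p \<in> {0..1} \<Longrightarrow> minpns_lik m n y p \<le> minpns_lik m n y F"
  shows "F < p1"
proof (rule ccontr)
  assume "\<not> F < p1"
  have p1_01: "0 < p1" "p1 < 1"
    using p1 lo_pos hi_less_1 by auto
  obtain d where d: "0 < d" "\<And>h. 0 < h \<Longrightarrow> h < d \<Longrightarrow> loglik m n y p1 < loglik m n y (p1 - h)"
    using DERIV_neg_dec_left[OF loglik_has_real_derivative[OF p1_01] neg] by blast
  define h where "h = min d p1 / 2"
  have h: "0 < h" "h < d" "h < p1"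
    unfolding h_def using d(1) p1_01 by auto
  define p' where "p' = p1 - h"
  have p': "0 < p'" "p' < 1" "loglik m n y p1 < loglik m n y p'"
    unfolding p'_def using h p1_01 d(2) by auto
  have below_p1: "minpns_lik m n y p \<le> minpns_lik m n y p1" if "p1 \<le> p" "p \<le> hi" for p
  proof -
    have "score m n y x \<le> 0" if "p1 \<le> x" "x \<le> hi" for x
      using score_decreasing[of p1 x] that p1 neg by (cases "x = p1") auto
    then have "loglik m n y p \<le> loglik m n y p1"
      using that p1_01 hi_less_1 by (intro loglik_antimono_on) auto
    then show ?thesis
      using that p1_01 hi_less_1 by (subst minpns_lik_le_iff) auto
  qed
  have "minpns_lik m n y F \<le> minpns_lik m n y p1"
  proof (cases "F \<le> hi")
    case True
    then show ?thesis
      using below_p1 \<open>\<not> F < p1\<close> by simp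
  next
    case False
    then show ?thesis
      using minpns_lik_le_hi[of F] below_p1[of hi] F p1 by simp
  qed
  also have "minpns_lik m n y p1 < minpns_lik m n y p'"
    using p' p1_01 by (subst minpns_lik_le_iff) auto
  finally show False
    using F_max[of p'] p' by simp
qed

lemma argmax_greater_if_score_pos:
  assumes p1: "lo \<le> p1" "p1 \<le> hi" and pos: "0 < score m n y p1"
    and F: "F \<in> {0..1}" and F_max: "\<And>p. p \<in> {0..1} \<Longrightarrow> minpns_lik m n y p \<le> minpns_lik m n y F"
  shows "p1 < F"
proof (rule ccontr)
  assume "\<not> p1 < F"
  have p1_01: "0 < p1" "p1 < 1"
    using p1 lo_pos hi_less_1 by auto
  obtain d where d: "0 < d" "\<And>h. 0 < h \<Longrightarrow> h < d \<Longrightarrow> loglik m n y p1 < loglik m n y (p1 + h)"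
    using DERIV_pos_inc_right[OF loglik_has_real_derivative[OF p1_01] pos] by blast
  define h where "h = min d (1 - p1) / 2"
  have h: "0 < h" "h < d" "h < 1 - p1"
    unfolding h_def using d(1) p1_01 by auto
  define p' where "p' = p1 + h"
  have p': "0 < p'" "p' < 1" "loglik m n y p1 < loglik m n y p'"
    unfolding p'_def using h p1_01 d(2) by auto
  have above_p1: "minpns_lik m n y p \<le> minpns_lik m n y p1" if "lo \<le> p" "p \<le> p1" for p
  proof -
    have "0 \<le> score m n y x" if "lo \<le> x" "x \<le> p1" for x
      using score_decreasing[of x p1] that p1 pos by (cases "x = p1") auto
    then have "loglik m n y p \<le> loglik m n y p1"
      using that p1_01 lo_pos by (intro loglik_mono_on) auto
    then show ?thesis
      using that p1_01 lo_pos by (subst minpns_lik_le_iff) auto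
  qed
  have "minpns_lik m n y F \<le> minpns_lik m n y p1"
  proof (cases "lo \<le> F")
    case True
    then show ?thesis
      using above_p1 \<open>\<not> p1 < F\<close> by simp
  next
    case False
    then show ?thesis
      using minpns_lik_le_lo[of F] above_p1[of lo] F p1 by simp
  qed
  also have "minpns_lik m n y p1 < minpns_lik m n y p'"
    using p' p1_01 by (subst minpns_lik_le_iff) auto
  finally show False
    using F_max[of p'] p' by simp
qed

end

lemma eventually_nhds_score_weight_bounds:
  assumes r: "r \<in> {1..m}" and p0: "0 < p0" "p0 < 1" and \<eta>: "0 < \<eta>"
  shows "\<forall>\<^sub>F p in nhds p0. \<bar>score_weight' m r p\<bar> < \<bar>score_weight' m r p0\<bar> + 1
    \<and> \<bar>Bmix m r p - Bmix m r p0\<bar> < \<eta>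
    \<and> score_weight m r p0 * bmix m r p0 / 2 < score_weight m r p * bmix m r p"
proof -
  have pos: "0 < score_weight m r p0 * bmix m r p0"
    using score_weight_pos[OF r p0] bmix_pos[of r m p0] r p0 by simp
  have "((\<lambda>p. \<bar>score_weight' m r p\<bar>) \<longlongrightarrow> \<bar>score_weight' m r p0\<bar>) (at p0)"
    using isCont_score_weight'[OF r p0] unfolding isCont_def by (rule tendsto_rabs)
  then have "\<forall>\<^sub>F p in at p0. \<bar>score_weight' m r p\<bar> < \<bar>score_weight' m r p0\<bar> + 1"
    by (rule order_tendstoD(2)) simp
  moreover have "((\<lambda>p. \<bar>Bmix m r p - Bmix m r p0\<bar>) \<longlongrightarrow> \<bar>Bmix m r p0 - Bmix m r p0\<bar>) (at p0)"
    using isCont_Bmix[OF p0] unfolding isCont_def by (intro tendsto_intros)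
  then have "\<forall>\<^sub>F p in at p0. \<bar>Bmix m r p - Bmix m r p0\<bar> < \<eta>"
    by (rule order_tendstoD(2)) (simp add: \<eta>)
  moreover have "((\<lambda>p. score_weight m r p * bmix m r p) \<longlongrightarrow> score_weight m r p0 * bmix m r p0) (at p0)"
    using isCont_score_weight[OF r p0] isCont_bmix unfolding isCont_def by (rule tendsto_mult)
  then have "\<forall>\<^sub>F p in at p0. score_weight m r p0 * bmix m r p0 / 2 < score_weight m r p * bmix m r p"
    by (rule order_tendstoD(1)) (use pos in \<open>simp add: mult.commute\<close>)
  ultimately have "\<forall>\<^sub>F p in at p0. \<bar>score_weight' m r p\<bar> < \<bar>score_weight' m r p0\<bar> + 1
      \<and> \<bar>Bmix m r p - Bmix m r p0\<bar> < \<eta>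
      \<and> score_weight m r p0 * bmix m r p0 / 2 < score_weight m r p * bmix m r p"
    by eventually_elim blast
  then show ?thesis
    unfolding eventually_nhds_conv_at using \<eta> pos by (simp add: mult.commute)
qed

lemma score'_term_eventually_neg:
  assumes r: "r \<in> {1..m}" and p0: "0 < p0" "p0 < 1"
  shows "\<forall>\<^sub>F \<epsilon> in at_right 0. \<forall>p u. \<bar>p - p0\<bar> \<le> \<epsilon> \<longrightarrow> \<bar>u - Bmix m r p0\<bar> \<le> \<epsilon> \<longrightarrow>
     score_weight' m r p * (u - Bmix m r p) - score_weight m r p * bmix m r p < 0"
proof -
  define c where "c = score_weight m r p0 * bmix m r p0"
  define K where "K = \<bar>score_weight' m r p0\<bar> + 1"
  define \<eta> where "\<eta> = c / (8 * K)"
  have c: "0 < c" and K: "0 < K"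
    unfolding c_def K_def using score_weight_pos[OF r p0] bmix_pos[of r m p0] r p0 by simp_all
  then have \<eta>: "0 < \<eta>"
    unfolding \<eta>_def by simp
  obtain \<delta> where \<delta>: "0 < \<delta>" and near: "\<And>p. dist p p0 < \<delta> \<Longrightarrow> \<bar>score_weight' m r p\<bar> < K
      \<and> \<bar>Bmix m r p - Bmix m r p0\<bar> < \<eta> \<and> c / 2 < score_weight m r p * bmix m r p"
    using eventually_nhds_score_weight_bounds[OF r p0 \<eta>] unfolding eventually_nhds_metric c_def K_def by blast
  show ?thesis
    unfolding eventually_at_right_field
  proof (intro exI[of _ "min \<delta> \<eta>"] conjI allI impI)
    fix \<epsilon> p u :: real
    assume "0 < \<epsilon>" "\<epsilon> < min \<delta> \<eta>" "\<bar>p - p0\<bar> \<le> \<epsilon>" "\<bar>u - Bmix m r p0\<bar> \<le> \<epsilon>"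
    then have "\<bar>score_weight' m r p\<bar> < K" "\<bar>u - Bmix m r p\<bar> \<le> 2 * \<eta>"
      and gb: "c / 2 < score_weight m r p * bmix m r p"
      using near[of p] by (auto simp: dist_real_def)
    then have "\<bar>score_weight' m r p\<bar> * \<bar>u - Bmix m r p\<bar> \<le> K * (2 * \<eta>)"
      using K by (intro mult_mono) auto
    then have "score_weight' m r p * (u - Bmix m r p) \<le> K * (2 * \<eta>)"
      by (metis abs_ge_self abs_mult order.trans)
    also have "K * (2 * \<eta>) = c / 4"
      unfolding \<eta>_def using K by (simp add: field_simps)
    finally show "score_weight' m r p * (u - Bmix m r p) - score_weight m r p * bmix m r p < 0"
      using gb c by linarith
  qed (use \<delta> \<eta> in simp)
qed

lemma score'_neg:
  assumes m: "1 \<le> m" and n: "\<And>r. r \<in> {1..m} \<Longrightarrow> 0 < n r"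
    and neg: "\<And>r. r \<in> {1..m} \<Longrightarrow>
      score_weight' m r p * (real (y r) / real (n r) - Bmix m r p) - score_weight m r p * bmix m r p < 0"
  shows "score' m n y p < 0"
proof -
  have "score' m n y p < (\<Sum>r=1..m. 0)"
    unfolding score'_def
  proof (rule sum_strict_mono)
    fix r assume r: "r \<in> {1..m}"
    have "real (n r) * (score_weight' m r p * (real (y r) / real (n r) - Bmix m r p)
        - score_weight m r p * bmix m r p) < 0"
      using n[OF r] neg[OF r] by (simp add: mult_pos_neg)
    moreover have "real (n r) * (score_weight' m r p * (real (y r) / real (n r) - Bmix m r p)
        - score_weight m r p * bmix m r p) = score_weight' m r p * (real (y r) - real (n r) * Bmix m r p)
        - real (n r) * (score_weight m r p * bmix m r p)"
      using n[OF r] by (simp add: field_simps)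
    ultimately show "score_weight' m r p * (real (y r) - real (n r) * Bmix m r p)
        - real (n r) * (score_weight m r p * bmix m r p) < 0"
      by simp
  qed (use m in auto)
  then show ?thesis
    by simp
qed

lemma eventually_Bmix_gap:
  assumes "0 < \<delta>" "\<delta> \<le> p0" "p0 + \<delta> \<le> 1"
  shows "\<forall>\<^sub>F \<eta> in at_right 0. \<forall>r\<in>{1..m}.
    Bmix m r (p0 - \<delta>) < Bmix m r p0 - \<eta> \<and> Bmix m r p0 + \<eta> < Bmix m r (p0 + \<delta>)"
proof (intro eventually_ball_finite ballI eventually_conj)
  fix r assume r: "r \<in> {1..m}"
  have "Bmix m r (p0 - \<delta>) < Bmix m r p0" "Bmix m r p0 < Bmix m r (p0 + \<delta>)"
    using r assms by (auto intro!: Bmix_strict_mono)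
  then have "\<forall>\<^sub>F \<eta> in at_right 0. \<eta> < Bmix m r p0 - Bmix m r (p0 - \<delta>)"
    "\<forall>\<^sub>F \<eta> in at_right 0. \<eta> < Bmix m r (p0 + \<delta>) - Bmix m r p0"
    by (auto intro: order_tendstoD(2)[OF tendsto_ident_at])
  then show "\<forall>\<^sub>F \<eta> in at_right 0. Bmix m r (p0 - \<delta>) < Bmix m r p0 - \<eta>"
    "\<forall>\<^sub>F \<eta> in at_right 0. Bmix m r p0 + \<eta> < Bmix m r (p0 + \<delta>)"
    by (eventually_elim, linarith)+
qed simp

lemma concave_window_if_counts_near:
  assumes m: "1 \<le> m" and \<delta>: "0 < \<delta>" "\<delta> < p0" "p0 + \<delta> < 1" and \<eta>: "\<eta> \<le> \<delta>"
    and neg: "\<And>r p u. r \<in> {1..m} \<Longrightarrow> \<bar>p - p0\<bar> \<le> \<delta> \<Longrightarrow> \<bar>u - Bmix m r p0\<bar> \<le> \<delta> \<Longrightarrow>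
      score_weight' m r p * (u - Bmix m r p) - score_weight m r p * bmix m r p < 0"
    and gap: "\<And>r. r \<in> {1..m} \<Longrightarrow> Bmix m r (p0 - \<delta>) < Bmix m r p0 - \<eta> \<and> Bmix m r p0 + \<eta> < Bmix m r (p0 + \<delta>)"
    and good: "\<And>r. r \<in> {1..m} \<Longrightarrow> 0 < n r \<and> \<bar>real (y r) - real (n r) * Bmix m r p0\<bar> \<le> \<eta> * real (n r)"
  shows "concave_window m n y (p0 - \<delta>) (p0 + \<delta>)"
proof -
  have freq: "\<bar>real (y r) / real (n r) - Bmix m r p0\<bar> \<le> \<eta>" if r: "r \<in> {1..m}" for r
  proof -
    have "real (y r) / real (n r) - Bmix m r p0 = (real (y r) - real (n r) * Bmix m r p0) / real (n r)"
      using good[OF r] by (simp add: field_simps)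
    then show ?thesis
      using good[OF r] by (simp add: abs_divide pos_divide_le_eq)
  qed
  show ?thesis
  proof
  fix r assume r: "r \<in> {1..m}"
  show "0 < n r"
    using good[OF r] by simp
  have "Bmix m r (p0 - \<delta>) \<le> real (y r) / real (n r)" "real (y r) / real (n r) \<le> Bmix m r (p0 + \<delta>)"
    using gap[OF r] freq[OF r] by (auto simp: abs_le_iff)
  then show "Bmix m r (p0 - \<delta>) * real (n r) \<le> real (y r)" "real (y r) \<le> Bmix m r (p0 + \<delta>) * real (n r)"
    using good[OF r] by (simp_all add: pos_le_divide_eq pos_divide_le_eq)
next
  fix a b assume ab: "p0 - \<delta> \<le> a" "a < b" "b \<le> p0 + \<delta>"
  show "score m n y b < score m n y a"
  proof (rule DERIV_neg_imp_decreasing[OF ab(2)])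
    fix x assume "a \<le> x" "x \<le> b"
    then have x: "\<bar>x - p0\<bar> \<le> \<delta>" "0 < x" "x < 1"
      using ab \<delta> by auto
    have "score' m n y x < 0"
      using m good order_trans[OF freq \<eta>] by (intro score'_neg neg x(1)) auto
    then show "\<exists>d. (score m n y has_real_derivative d) (at x) \<and> d < 0"
      using score_has_real_derivative[OF x(2,3)] by auto
  qed
  qed (use m \<delta> in auto)
qed

lemma concave_window_exists:
  assumes m: "1 \<le> m" and p0: "0 < p0" "p0 < 1"
  obtains \<delta> \<eta> where "0 < \<delta>" "0 < \<eta>"
    "\<forall>n y. (\<forall>r\<in>{1..m}. 0 < n r \<and> \<bar>real (y r) - real (n r) * Bmix m r p0\<bar> \<le> \<eta> * real (n r))
       \<longrightarrow> concave_window m n y (p0 - \<delta>) (p0 + \<delta>)"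
proof -
  have "\<forall>\<^sub>F \<epsilon> in at_right 0. \<forall>r\<in>{1..m}. \<forall>p u. \<bar>p - p0\<bar> \<le> \<epsilon> \<longrightarrow> \<bar>u - Bmix m r p0\<bar> \<le> \<epsilon> \<longrightarrow>
      score_weight' m r p * (u - Bmix m r p) - score_weight m r p * bmix m r p < 0"
    using score'_term_eventually_neg[OF _ p0] by (intro eventually_ball_finite) auto
  moreover have "\<forall>\<^sub>F \<epsilon> in at_right 0. \<epsilon> < p0" "\<forall>\<^sub>F \<epsilon> in at_right 0. \<epsilon> < 1 - p0"
    using p0 by (auto intro: order_tendstoD(2)[OF tendsto_ident_at])
  ultimately have "\<forall>\<^sub>F \<epsilon> in at_right 0. 0 < \<epsilon> \<and> \<epsilon> < p0 \<and> \<epsilon> < 1 - p0 \<and> (\<forall>r\<in>{1..m}. \<forall>p u.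
      \<bar>p - p0\<bar> \<le> \<epsilon> \<longrightarrow> \<bar>u - Bmix m r p0\<bar> \<le> \<epsilon> \<longrightarrow>
      score_weight' m r p * (u - Bmix m r p) - score_weight m r p * bmix m r p < 0)"
    using eventually_at_right_less[of 0] by eventually_elim blast
  then obtain \<delta> where \<delta>: "0 < \<delta>" "\<delta> < p0" "\<delta> < 1 - p0"
    and neg: "\<And>r p u. r \<in> {1..m} \<Longrightarrow> \<bar>p - p0\<bar> \<le> \<delta> \<Longrightarrow> \<bar>u - Bmix m r p0\<bar> \<le> \<delta> \<Longrightarrow>
      score_weight' m r p * (u - Bmix m r p) - score_weight m r p * bmix m r p < 0"
    using eventually_happens'[OF trivial_limit_at_right_real] by blast
  have "\<forall>\<^sub>F \<eta> in at_right 0. 0 < \<eta> \<and> \<eta> < \<delta> \<and> (\<forall>r\<in>{1..m}.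
      Bmix m r (p0 - \<delta>) < Bmix m r p0 - \<eta> \<and> Bmix m r p0 + \<eta> < Bmix m r (p0 + \<delta>))"
  proof -
    have "\<forall>\<^sub>F \<eta> in at_right 0. \<forall>r\<in>{1..m}.
        Bmix m r (p0 - \<delta>) < Bmix m r p0 - \<eta> \<and> Bmix m r p0 + \<eta> < Bmix m r (p0 + \<delta>)"
      using \<delta> by (intro eventually_Bmix_gap) auto
    with eventually_at_right_less[of 0] order_tendstoD(2)[OF tendsto_ident_at \<delta>(1)]
    show ?thesis
      by eventually_elim blast
  qed
  then obtain \<eta> where \<eta>: "0 < \<eta>" "\<eta> < \<delta>"
    and gap: "\<And>r. r \<in> {1..m} \<Longrightarrow> Bmix m r (p0 - \<delta>) < Bmix m r p0 - \<eta> \<and> Bmix m r p0 + \<eta> < Bmix m r (p0 + \<delta>)"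
    using eventually_happens'[OF trivial_limit_at_right_real] by blast
  show ?thesis
    using \<delta> \<eta> by (intro that[OF \<delta>(1) \<eta>(1)] allI impI concave_window_if_counts_near[OF m _ _ _ _ neg gap]) auto
qed

section \<open>Asymptotic normality of the maximum likelihood estimator\<close>

locale minpns_mle = stratified_counts m t "\<lambda>r. Bmix m r p0" nr lam M Y
  for m t p0 nr lam and M :: "nat \<Rightarrow> 'a measure" and Y +
  fixes Fml :: "nat \<Rightarrow> 'a \<Rightarrow> real"
  assumes p0: "0 < p0" "p0 < 1"
    and Fml_meas: "\<And>k. Fml k \<in> borel_measurable (M k)"
    and Fml_range: "\<And>k \<omega>. \<omega> \<in> space (M k) \<Longrightarrow> Fml k \<omega> \<in> {0..1}"
    and Fml_max: "\<And>k \<omega> p. \<omega> \<in> space (M k) \<Longrightarrow> p \<in> {0..1} \<Longrightarrow>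
       minpns_lik m (nr k) (\<lambda>r. \<Sum>j<nr k r. if Y k r j \<omega> \<le> t then 1 else 0) p
     \<le> minpns_lik m (nr k) (\<lambda>r. \<Sum>j<nr k r. if Y k r j \<omega> \<le> t then 1 else 0) (Fml k \<omega>)"
begin

definition fisher_info :: real where
  "fisher_info = (\<Sum>r=1..m. lam r * (bmix m r p0)\<^sup>2 / (Bmix m r p0 * (1 - Bmix m r p0)))"

lemma fisher_info_pos: "0 < fisher_info"
  unfolding fisher_info_def
proof (intro sum_pos)
  fix r assume r: "r \<in> {1..m}"
  then show "0 < lam r * (bmix m r p0)\<^sup>2 / (Bmix m r p0 * (1 - Bmix m r p0))"
    using lam_pos[OF r] q_bounds[OF r] bmix_pos[of r m p0] p0 by simp
qed (use m_pos in auto)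

lemma fisher_info_eq:
  "fisher_info = (\<Sum>r=1..m. lam r * score_weight m r p0 * bmix m r p0)"
  "fisher_info = (\<Sum>r=1..m. (score_weight m r p0)\<^sup>2 * lam r * (Bmix m r p0 * (1 - Bmix m r p0)))"
  unfolding fisher_info_def score_weight_def using q_bounds
  by (auto intro!: sum.cong simp: power2_eq_square)

definition shifted_point :: "real \<Rightarrow> nat \<Rightarrow> real" where
  "shifted_point x k = p0 + x / sqrt (sample_size k)"

lemma sqrt_sample_size_tendsto: "filterlim (\<lambda>k. sqrt (sample_size k)) at_top sequentially"
  by (rule filterlim_compose[OF sqrt_at_top sample_size_tendsto])

lemma shifted_point_tendsto: "shifted_point x \<longlonglongrightarrow> p0"
proof -
  have "(\<lambda>k. p0 + x / sqrt (sample_size k)) \<longlonglongrightarrow> p0 + 0"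
    by (intro tendsto_add tendsto_const tendsto_divide_0[OF tendsto_const]
        filterlim_at_top_imp_at_infinity sqrt_sample_size_tendsto)
  then show ?thesis
    by (simp add: shifted_point_def[abs_def])
qed

lemma score_weight_shifted_tendsto:
  "r \<in> {1..m} \<Longrightarrow> (\<lambda>k. score_weight m r (shifted_point x k)) \<longlonglongrightarrow> score_weight m r p0"
  by (rule isCont_tendsto_compose[OF isCont_score_weight[OF _ p0] shifted_point_tendsto])

definition centred_score :: "real \<Rightarrow> nat \<Rightarrow> 'a \<Rightarrow> real" where
  "centred_score x k \<omega> = (\<Sum>r=1..m. score_weight m r (shifted_point x k)
     * (real (stratum_count k r \<omega>) - real (nr k r) * Bmix m r p0)) / sqrt (sample_size k)"

definition score_centring :: "real \<Rightarrow> nat \<Rightarrow> real" where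
  "score_centring x k = (\<Sum>r=1..m. score_weight m r (shifted_point x k)
     * (real (nr k r) * (Bmix m r (shifted_point x k) - Bmix m r p0))) / sqrt (sample_size k)"

lemma score_shifted_point_eq:
  "score m (nr k) (\<lambda>r. stratum_count k r \<omega>) (shifted_point x k) / sqrt (sample_size k)
    = centred_score x k \<omega> - score_centring x k"
  unfolding centred_score_def score_centring_def score_def
  by (simp add: diff_divide_distrib[symmetric] sum_subtractf[symmetric] algebra_simps)

lemma measurable_centred_score [measurable]: "centred_score x k \<in> borel_measurable (M k)"
  unfolding centred_score_def by measurable

lemma centred_score_clt:
  "weak_conv_m (\<lambda>k. distr (M k) borel (\<lambda>\<omega>. centred_score x k \<omega> / sqrt fisher_info)) std_normal_distribution"
proof -
  have "weak_conv_m (\<lambda>k. distr (M k) borel (\<lambda>\<omega>. (\<Sum>r=1..m. score_weight m r (shifted_point x k)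
      * (real (stratum_count k r \<omega>) - real (nr k r) * Bmix m r p0)) / (sqrt (sample_size k) * sqrt fisher_info)))
    std_normal_distribution"
    using fisher_info_pos fisher_info_eq(2)
    by (intro weighted_counts_clt) (auto intro: score_weight_shifted_tendsto)
  then show ?thesis
    by (simp add: centred_score_def)
qed

lemma score_centring_tendsto: "score_centring x \<longlonglongrightarrow> x * fisher_info"
proof -
  have lim: "(\<lambda>k. \<Sum>r=1..m. score_weight m r (shifted_point x k) * (real (nr k r) / real (sample_size k))
      * (sqrt (sample_size k) * (Bmix m r (p0 + x / sqrt (sample_size k)) - Bmix m r p0)))
    \<longlonglongrightarrow> (\<Sum>r=1..m. score_weight m r p0 * lam r * (x * bmix m r p0))"
    using nr_fraction
    by (intro tendsto_sum tendsto_mult score_weight_shifted_tendsto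
        tendsto_scaled_increment[OF Bmix_has_real_derivative[OF p0] sqrt_sample_size_tendsto])
      (simp_all add: sample_size_def)
  have eq: "eventually (\<lambda>k. (\<Sum>r=1..m. score_weight m r (shifted_point x k) * (real (nr k r) / real (sample_size k))
      * (sqrt (sample_size k) * (Bmix m r (p0 + x / sqrt (sample_size k)) - Bmix m r p0)))
    = score_centring x k) sequentially"
    using eventually_sample_size_pos
  proof eventually_elim
    case (elim k)
    have "a * (b / (c * c)) * (c * d) = a * (b * d) / c" if "0 < c" for a b c d :: real
      using that by (simp add: field_simps)
    from this[of "sqrt (sample_size k)"] elim show ?case
      unfolding score_centring_def sum_divide_distrib shifted_point_def by (intro sum.cong) simp_all
  qed
  have "(\<Sum>r=1..m. score_weight m r p0 * lam r * (x * bmix m r p0)) = x * fisher_info"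
    unfolding fisher_info_eq(1) by (simp add: sum_distrib_left mult_ac)
  with Lim_transform_eventually[OF lim eq] show ?thesis
    by simp
qed

lemma mle_side_if_concave_window:
  assumes \<omega>: "\<omega> \<in> space (M k)" and N: "0 < sample_size k"
    and window: "concave_window m (nr k) (\<lambda>r. stratum_count k r \<omega>) lo hi"
    and p: "lo \<le> shifted_point x k" "shifted_point x k \<le> hi"
  shows "centred_score x k \<omega> < score_centring x k \<Longrightarrow> sqrt (sample_size k) * (Fml k \<omega> - p0) \<le> x"
    and "sqrt (sample_size k) * (Fml k \<omega> - p0) \<le> x \<Longrightarrow> centred_score x k \<omega> \<le> score_centring x k"
proof -
  interpret concave_window m "nr k" "\<lambda>r. stratum_count k r \<omega>" lo hi
    by (rule window)
  have F: "Fml k \<omega> \<in> {0..1}"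
    using \<omega> Fml_range by auto
  have F_max: "minpns_lik m (nr k) (\<lambda>r. stratum_count k r \<omega>) p
      \<le> minpns_lik m (nr k) (\<lambda>r. stratum_count k r \<omega>) (Fml k \<omega>)" if "p \<in> {0..1}" for p
    using \<omega> Fml_max that by (simp add: stratum_count_def)
  have "sqrt (sample_size k) * (Fml k \<omega> - p0) \<le> x \<longleftrightarrow> Fml k \<omega> \<le> shifted_point x k"
    using N by (simp add: shifted_point_def field_simps)
  moreover have "centred_score x k \<omega> < score_centring x k
      \<longleftrightarrow> score m (nr k) (\<lambda>r. stratum_count k r \<omega>) (shifted_point x k) < 0"
    "centred_score x k \<omega> \<le> score_centring x k
      \<longleftrightarrow> score m (nr k) (\<lambda>r. stratum_count k r \<omega>) (shifted_point x k) \<le> 0"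
    unfolding less_iff_diff_less_0[of "centred_score x k \<omega>"] le_iff_diff_le_0[of "centred_score x k \<omega>"]
      score_shifted_point_eq[symmetric]
    using N by (simp_all add: divide_less_0_iff divide_le_0_iff)
  ultimately show "centred_score x k \<omega> < score_centring x k \<Longrightarrow> sqrt (sample_size k) * (Fml k \<omega> - p0) \<le> x"
    and "sqrt (sample_size k) * (Fml k \<omega> - p0) \<le> x \<Longrightarrow> centred_score x k \<omega> \<le> score_centring x k"
    using argmax_less_if_score_neg[OF p _ F F_max] argmax_greater_if_score_pos[OF p _ F F_max]
    by force+
qed

lemma mle_event_bracket:
  assumes \<delta>: "0 < \<delta>"
    and window: "\<forall>n y. (\<forall>r\<in>{1..m}. 0 < n r \<and> \<bar>real (y r) - real (n r) * Bmix m r p0\<bar> \<le> \<eta> * real (n r))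
       \<longrightarrow> concave_window m n y (p0 - \<delta>) (p0 + \<delta>)"
  shows "eventually (\<lambda>k.
      {\<omega> \<in> space (M k). centred_score x k \<omega> < score_centring x k}
        \<subseteq> {\<omega> \<in> space (M k). sqrt (sample_size k) * (Fml k \<omega> - p0) \<le> x} \<union> deviation_event \<eta> k
    \<and> {\<omega> \<in> space (M k). sqrt (sample_size k) * (Fml k \<omega> - p0) \<le> x}
        \<subseteq> {\<omega> \<in> space (M k). centred_score x k \<omega> \<le> score_centring x k} \<union> deviation_event \<eta> k)
    sequentially"
proof -
  have "eventually (\<lambda>k. 0 < nr k r) sequentially" if "r \<in> {1..m}" for r
    using filterlim_at_top[THEN iffD1, OF nr_tendsto[OF that], rule_format, of 1] by (simp add: Suc_le_eq)
  then have "eventually (\<lambda>k. \<forall>r\<in>{1..m}. 0 < nr k r) sequentially"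
    by (intro eventually_ball_finite) auto
  moreover have "eventually (\<lambda>k. \<bar>shifted_point x k - p0\<bar> < \<delta>) sequentially"
    using tendstoD[OF shifted_point_tendsto \<delta>] by (simp add: dist_real_def)
  ultimately show ?thesis
    using eventually_sample_size_pos
  proof eventually_elim
    case (elim k)
    have "concave_window m (nr k) (\<lambda>r. stratum_count k r \<omega>) (p0 - \<delta>) (p0 + \<delta>)"
      if "\<omega> \<in> space (M k) - deviation_event \<eta> k" for \<omega>
      using that elim(1) window by (auto simp: deviation_event_def not_less)
    moreover have "p0 - \<delta> \<le> shifted_point x k" "shifted_point x k \<le> p0 + \<delta>"
      using elim(2) by auto
    ultimately show ?case
      using mle_side_if_concave_window[OF _ elim(3)] by blast
  qed
qed

lemma prob_mle_le_tendsto: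
  "(\<lambda>k. measure (M k) {\<omega> \<in> space (M k). sqrt (sample_size k) * (Fml k \<omega> - p0) \<le> x})
    \<longlonglongrightarrow> cdf std_normal_distribution (x * sqrt fisher_info)"
proof -
  define s where "s = sqrt fisher_info"
  have s: "0 < s" "x * fisher_info / s = x * s"
    unfolding s_def using fisher_info_pos by (simp_all add: field_simps)
  have "(\<lambda>k. score_centring x k / s) \<longlonglongrightarrow> x * s"
    using tendsto_divide[OF score_centring_tendsto[of x] tendsto_const, of s] s by simp
  then have "(\<lambda>k. measure (M k) {\<omega> \<in> space (M k). centred_score x k \<omega> / s < score_centring x k / s})
      \<longlonglongrightarrow> cdf std_normal_distribution (x * s)"
    "(\<lambda>k. measure (M k) {\<omega> \<in> space (M k). centred_score x k \<omega> / s \<le> score_centring x k / s})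
      \<longlonglongrightarrow> cdf std_normal_distribution (x * s)"
    using centred_score_clt[of x] unfolding s_def[symmetric]
    by (auto intro!: weak_conv_m_prob_less_tendsto weak_conv_m_prob_le_tendsto prob_space_M isCont_cdf_std_normal)
  then have lim_less: "(\<lambda>k. measure (M k) {\<omega> \<in> space (M k). centred_score x k \<omega> < score_centring x k})
      \<longlonglongrightarrow> cdf std_normal_distribution (x * s)"
    and lim_le: "(\<lambda>k. measure (M k) {\<omega> \<in> space (M k). centred_score x k \<omega> \<le> score_centring x k})
      \<longlonglongrightarrow> cdf std_normal_distribution (x * s)"
    using s(1) by (simp_all add: divide_less_cancel divide_le_cancel)
  obtain \<delta> \<eta> where "0 < \<delta>" "0 < \<eta>"
    and window: "\<forall>n y. (\<forall>r\<in>{1..m}. 0 < n r \<and> \<bar>real (y r) - real (n r) * Bmix m r p0\<bar> \<le> \<eta> * real (n r))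
       \<longrightarrow> concave_window m n y (p0 - \<delta>) (p0 + \<delta>)"
    using concave_window_exists[OF m_pos p0] by blast
  have [measurable]: "Fml k \<in> borel_measurable (M k)" for k
    by (rule Fml_meas)
  show ?thesis
    unfolding s_def[symmetric]
    by (rule prob_tendsto_between[OF prob_space_M _ _ deviation_event_sets _
          mle_event_bracket[OF \<open>0 < \<delta>\<close> window] lim_less lim_le
          deviation_event_prob_tendsto_0[OF \<open>0 < \<eta>\<close>]])
      (measurable, measurable, measurable)
qed

lemma mle_asymptotically_normal:
  "weak_conv_m (\<lambda>k. distr (M k) borel (\<lambda>\<omega>. sqrt (sample_size k) * (Fml k \<omega> - p0)))
     (density lborel (normal_density 0 (sqrt (sigma_ml_sq m lam p0))))"
  unfolding weak_conv_m_def weak_conv_def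
proof (intro allI impI)
  fix x
  have "sigma_ml_sq m lam p0 = inverse fisher_info"
    unfolding sigma_ml_sq_def fisher_info_def ..
  then have "cdf (density lborel (normal_density 0 (sqrt (sigma_ml_sq m lam p0)))) x
      = cdf std_normal_distribution (x * sqrt fisher_info)"
    using cdf_normal_density[of "1 / sqrt fisher_info" x] fisher_info_pos
    by (simp add: real_sqrt_divide inverse_eq_divide)
  moreover have "cdf (distr (M k) borel (\<lambda>\<omega>. sqrt (sample_size k) * (Fml k \<omega> - p0))) x
      = measure (M k) {\<omega> \<in> space (M k). sqrt (sample_size k) * (Fml k \<omega> - p0) \<le> x}" for k
  proof -
    have "(\<lambda>\<omega>. sqrt (sample_size k) * (Fml k \<omega> - p0)) \<in> borel_measurable (M k)"
      using Fml_meas[of k] by measurable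
    then show ?thesis
      unfolding cdf_def by (subst measure_distr) (auto intro!: arg_cong[where f="measure (M k)"])
  qed
  ultimately show "(\<lambda>k. cdf (distr (M k) borel (\<lambda>\<omega>. sqrt (sample_size k) * (Fml k \<omega> - p0))) x)
      \<longlonglongrightarrow> cdf (density lborel (normal_density 0 (sqrt (sigma_ml_sq m lam p0)))) x"
    using prob_mle_le_tendsto[of x] by (simp only:)
qed

end

theorem theorem3:
  fixes m :: nat and G :: "real measure" and t :: real
    and nr :: "nat \<Rightarrow> nat \<Rightarrow> nat"
    and lam :: "nat \<Rightarrow> real"
    and M :: "nat \<Rightarrow> 'a measure"
    and Y :: "nat \<Rightarrow> nat \<Rightarrow> nat \<Rightarrow> 'a \<Rightarrow> real"
    and Fml :: "nat \<Rightarrow> 'a \<Rightarrow> real"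
  assumes m: "m \<ge> 1"
    and G: "real_distribution G"
    and Ft: "0 < cdf G t" "cdf G t < 1"
    and M: "\<And>k. prob_space (M k)"
    and indep: "\<And>k. prob_space.indep_vars (M k) (\<lambda>_. borel) (\<lambda>(r, j). Y k r j)
                        {(r, j). r \<in> {1..m} \<and> j < nr k r}"
    and law: "\<And>k r j y. r \<in> {1..m} \<Longrightarrow> j < nr k r \<Longrightarrow>
                 measure (M k) {\<omega> \<in> space (M k). Y k r j \<omega> \<le> y} = Bmix m r (cdf G y)"
    and Fml_meas: "\<And>k. Fml k \<in> borel_measurable (M k)"
    and Fml_range: "\<And>k \<omega>. \<omega> \<in> space (M k) \<Longrightarrow> Fml k \<omega> \<in> {0..1}"
    and Fml_max: "\<And>k \<omega> p. \<omega> \<in> space (M k) \<Longrightarrow> p \<in> {0..1} \<Longrightarrow>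
         minpns_lik m (nr k) (\<lambda>r. \<Sum>j<nr k r. if Y k r j \<omega> \<le> t then 1 else 0) p
       \<le> minpns_lik m (nr k) (\<lambda>r. \<Sum>j<nr k r. if Y k r j \<omega> \<le> t then 1 else 0) (Fml k \<omega>)"
    and n_inf: "\<And>r. r \<in> {1..m} \<Longrightarrow> filterlim (\<lambda>k. nr k r) at_top sequentially"
    and lam_lim: "\<And>r. r \<in> {1..m} \<Longrightarrow>
         (\<lambda>k. real (nr k r) / real (\<Sum>s = 1..m. nr k s)) \<longlonglongrightarrow> lam r"
    and lam_range: "\<And>r. r \<in> {1..m} \<Longrightarrow> 0 < lam r \<and> lam r < 1"
    and lam_sum: "(\<Sum>r = 1..m. lam r) = 1"
  shows "weak_conv_m
           (\<lambda>k. distr (M k) borel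
                  (\<lambda>\<omega>. sqrt (real (\<Sum>s = 1..m. nr k s)) * (Fml k \<omega> - cdf G t)))
           (density lborel (normal_density 0 (sqrt (sigma_ml_sq m lam (cdf G t)))))"
proof -
  \<comment> \<open>Only the law of the observations at \<open>t\<close> enters.\<close>
  interpret minpns_mle m t "cdf G t" nr lam M Y Fml
  proof (intro minpns_mle.intro stratified_counts.intro minpns_mle_axioms.intro)
    show "0 < lam r" if "r \<in> {1..m}" for r
      using lam_range[OF that] by simp
    show "0 < Bmix m r (cdf G t) \<and> Bmix m r (cdf G t) < 1" if "r \<in> {1..m}" for r
      using Bmix_bounds[OF that Ft] by simp
  qed (fact m M indep law Fml_meas Fml_range Fml_max n_inf lam_lim Ft)+
  show ?thesis
    using mle_asymptotically_normal unfolding sample_size_def .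
qed

end
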